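(* Let $G\le\mathrm{O}(d)$ be finite. The following are equivalent: (a) $|C([x],[y])|=1$ for all $x,y\in\mathbb{R}^d$; (b) for every $x\in P(G)$, $Q_x=P(G)$; (c) $G$ is a reflection group; (d) $\chi(G)=1$.
   Context: For $x\in\mathbb{R}^d$, $[x]:=\{gx:g\in G\}$; $\mathbb{R}^d/G$ has the quotient metric $d([x],[y]):=\min_{p\in[x],q\in[y]}\|p-q\|$. In a metric space, a curve $\gamma:[0,L]\to M$ with $L\ge0$ is a minimal geodesic if $d(\gamma(s),\gamma(t))=|s-t|$ for all $s,t$; $C(a,b)$ is the set of minimal geodesics with $\gamma(0)=a$, $\gamma(L)=b$. The open Voronoi cell $V_x$ is the set of $y$ such that $x$ is the unique maximizer of $\langle p,y\rangle$ over $p\in[x]$; $Q_x:=\bigcup_{p\in[x]}V_p$. $P(G):=\{x:\mathrm{stab}_G(x)=\{\mathrm{id}\}\}$, $S(x,y):=\{q\in[y]:V_q\cap V_x\ne\varnothing\}$, $\chi(G):=\max_{x,y\in P(G)}|S(x,y)|$. A reflection group is a finite subgroup of $\mathrm{O}(d)$ generated by orthogonal reflections across hyperplanes (the trivial group included). *)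

theory Defs
  imports "HOL-Analysis.Analysis"
begin

text \<open>Groups G are sets of maps 'a \<Rightarrow> 'a on a Euclidean space 'a (so d = DIM('a)).\<close>

definition orbit :: "('a \<Rightarrow> 'a) set \<Rightarrow> 'a \<Rightarrow> 'a set" where
  "orbit G x = (\<lambda>g. g x) ` G"

definition quot_space :: "('a \<Rightarrow> 'a) set \<Rightarrow> 'a set set" where
  "quot_space G = range (orbit G)"

definition qdist :: "'a::real_normed_vector set \<Rightarrow> 'a set \<Rightarrow> real" where
  "qdist X Y = Inf {norm (p - q) | p q. p \<in> X \<and> q \<in> Y}"

text \<open>C(A,B): minimal geodesics gamma : [0,L] \<rightarrow> R^d/G from A to B, represented as pairs
  (L, gamma) where gamma is extended by the non-point {} outside [0,L].\<close>
definition min_geodesics ::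
  "('a::real_normed_vector \<Rightarrow> 'a) set \<Rightarrow> 'a set \<Rightarrow> 'a set \<Rightarrow> (real \<times> (real \<Rightarrow> 'a set)) set" where
  "min_geodesics G A B = {(L, \<gamma>). 0 \<le> L
      \<and> (\<forall>t\<in>{0..L}. \<gamma> t \<in> quot_space G)
      \<and> (\<forall>t. t \<notin> {0..L} \<longrightarrow> \<gamma> t = {})
      \<and> (\<forall>s\<in>{0..L}. \<forall>t\<in>{0..L}. qdist (\<gamma> s) (\<gamma> t) = \<bar>s - t\<bar>)
      \<and> \<gamma> 0 = A \<and> \<gamma> L = B}"

definition voronoi :: "('a::real_inner \<Rightarrow> 'a) set \<Rightarrow> 'a \<Rightarrow> 'a set" where
  "voronoi G x = {y. \<forall>p\<in>orbit G x. p \<noteq> x \<longrightarrow> inner p y < inner x y}"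

definition Qcell :: "('a::real_inner \<Rightarrow> 'a) set \<Rightarrow> 'a \<Rightarrow> 'a set" where
  "Qcell G x = (\<Union>p\<in>orbit G x. voronoi G p)"

definition principal :: "('a \<Rightarrow> 'a) set \<Rightarrow> 'a set" where
  "principal G = {x. {g\<in>G. g x = x} = {id}}"

definition Sset :: "('a::real_inner \<Rightarrow> 'a) set \<Rightarrow> 'a \<Rightarrow> 'a \<Rightarrow> 'a set" where
  "Sset G x y = {q\<in>orbit G y. voronoi G q \<inter> voronoi G x \<noteq> {}}"

definition chi :: "('a::real_inner \<Rightarrow> 'a) set \<Rightarrow> nat" where
  "chi G = Max {card (Sset G x y) | x y. x \<in> principal G \<and> y \<in> principal G}"

definition reflection :: "'a::real_inner \<Rightarrow> 'a \<Rightarrow> 'a" where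
  "reflection v = (\<lambda>x. x - (2 * inner x v / inner v v) *\<^sub>R v)"

text \<open>Group generated by a set R of maps (for involutions, closure under composition suffices).\<close>
inductive_set generated :: "('a \<Rightarrow> 'a) set \<Rightarrow> ('a \<Rightarrow> 'a) set" for R where
  gen_id: "id \<in> generated R"
| gen_step: "r \<in> R \<Longrightarrow> f \<in> generated R \<Longrightarrow> r \<circ> f \<in> generated R"

definition reflection_group :: "('a::real_inner \<Rightarrow> 'a) set \<Rightarrow> bool" where
  "reflection_group G \<longleftrightarrow>
     (\<exists>R. (\<forall>r\<in>R. \<exists>v. v \<noteq> 0 \<and> r = reflection v) \<and> G = generated R)"

end

(*
  Everything is organised around the condition "P(G) is contained in Q_x for every principal x",
  which is (b) because Q_x is always contained in P(G).

  If a principal z is not in Q_x, the function <-, z> has two maximisers q1, q2 on [x]. Both share a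
  Voronoi cell with z, so chi(G) >= 2; and the segments from z to q1 and to q2 project to two
  different minimal geodesics, since near the principal point z distinct points stay in distinct
  orbits. Conversely, under (b) the convex cell V_x lies in P(G), hence in the union of the disjoint
  open Voronoi cells of [y], and meets only one of them, so chi(G) = 1.

  Under (b), let W be the group generated by the reflections in G and c a principal point. For
  g in G, an element w of W maximising <c, w g c> puts w g c in the chamber of c. The points fixed
  by non-reflections have codimension at least two, so c and w g c are joined by a connected set
  of principal points inside the chamber; it lies in one Voronoi cell of [c], so w g c = c and
  g = w^-1 is in W.

  For a reflection group, the closed chamber K of a suitably generic c is a fundamental domain with
  <a, g b> <= <a, b> for a, b in K: words in simple reflections and the deletion condition show
  that G acts simply transitively on chambers. The quotient metric is then Euclidean on K, minimal
  geodesics lift to segments in K and are unique, and every principal z, moved into the chamber,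
  lies in the Voronoi cell of the point of [x] nearest to it.
*)

theory Submission
  imports Defs
begin

lemma inner_less_self_if_norm_eq:
  fixes p q :: "'a::real_inner"
  assumes "norm p = norm q" "p \<noteq> q" shows "p \<bullet> q < q \<bullet> q"
proof -
  have "0 < (p - q) \<bullet> (p - q)" using assms(2) by simp
  moreover have "p \<bullet> p = q \<bullet> q" using assms(1) by (simp add: dot_square_norm)
  ultimately show ?thesis by (simp add: inner_diff_left inner_diff_right inner_commute)
qed

lemma norm_diff_le_if_inner_le:
  fixes z p q :: "'a::real_inner"
  assumes "norm p = norm q" "p \<bullet> z \<le> q \<bullet> z" shows "norm (z - q) \<le> norm (z - p)"
proof -
  have "p \<bullet> p = q \<bullet> q" using assms(1) by (simp add: dot_square_norm)
  then have "(z - q) \<bullet> (z - q) \<le> (z - p) \<bullet> (z - p)"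
    using assms(2) by (simp add: inner_diff_left inner_diff_right inner_commute)
  then show ?thesis by (simp add: norm_le)
qed

lemma norm_diff_eq_if_inner_eq:
  fixes z p q :: "'a::real_inner"
  assumes "norm p = norm q" "p \<bullet> z = q \<bullet> z" shows "norm (z - p) = norm (z - q)"
  using norm_diff_le_if_inner_le[of p q z] norm_diff_le_if_inner_le[of q p z] assms by simp

lemma ex_max_on_finite:
  fixes f :: "'b \<Rightarrow> real"
  assumes "finite S" "S \<noteq> {}" shows "\<exists>a\<in>S. \<forall>b\<in>S. f b \<le> f a"
  using ex_is_arg_min_if_finite[OF assms, of "\<lambda>x. - f x"] by (auto simp: is_arg_min_linorder)

lemma ex_pos_below_finite:
  fixes f :: "'b \<Rightarrow> real"
  assumes "finite A" "\<forall>a\<in>A. 0 < f a" "0 < L"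
  shows "\<exists>t>0. t \<le> L \<and> (\<forall>a\<in>A. t < f a)"
proof -
  define m where "m = Min (insert L (f ` A))"
  have "0 < m" "m \<le> L" "\<forall>a\<in>A. m \<le> f a" using assms by (auto simp: m_def)
  then show ?thesis by (intro exI[of _ "m/2"]) auto
qed

lemma open_avoids_finite_negligible:
  fixes U :: "'a::euclidean_space set"
  assumes "open U" "U \<noteq> {}" "finite NN" "\<forall>N\<in>NN. negligible N"
  shows "\<exists>x\<in>U. \<forall>N\<in>NN. x \<notin> N"
proof (rule ccontr)
  assume "\<not> ?thesis"
  then have "U \<subseteq> \<Union>NN" by blast
  moreover have "negligible (\<Union>NN)" using assms(3,4) by blast
  ultimately show False using open_not_negligible[OF assms(1,2)] negligible_subset by blast
qed

lemma ex_nonorthogonal: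
  fixes V :: "'a::euclidean_space set"
  assumes "finite V" "0 \<notin> V" shows "\<exists>c. \<forall>v\<in>V. c \<bullet> v \<noteq> 0"
proof -
  have "\<forall>N\<in>(\<lambda>v. {x. v \<bullet> x = 0}) ` V. negligible N"
    using assms(2) by (auto intro!: negligible_hyperplane)
  then obtain c where "\<forall>N\<in>(\<lambda>v. {x. v \<bullet> x = 0}) ` V. c \<notin> N"
    using open_avoids_finite_negligible[of UNIV] finite_imageI[OF assms(1)] by blast
  then have "\<forall>v\<in>V. c \<bullet> v \<noteq> 0" by (auto simp: inner_commute)
  then show ?thesis by blast
qed

lemma nonpos_if_quadratic_nonpos:
  fixes D P Q :: real
  assumes "\<forall>e>0. D + e * P + e * e * Q \<le> 0" shows "D \<le> 0"
proof (rule tendsto_upperbound)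
  have "((\<lambda>e. D + e * P + e * e * Q) \<longlongrightarrow> D + 0 * P + 0 * 0 * Q) (at_right 0)"
    by (intro tendsto_intros)
  then show "((\<lambda>e. D + e * P + e * e * Q) \<longlongrightarrow> D) (at_right 0)" by simp
  show "\<forall>\<^sub>F e in at_right 0. D + e * P + e * e * Q \<le> 0"
    by (rule eventually_mono[OF eventually_at_right_less]) (use assms in auto)
qed simp

lemma isometric_path_eq_segment:
  fixes \<rho> :: "real \<Rightarrow> 'a::euclidean_space"
  assumes iso: "\<forall>s\<in>{0..L}. \<forall>t\<in>{0..L}. norm (\<rho> s - \<rho> t) = \<bar>s - t\<bar>" and t: "t \<in> {0..L}"
  shows "\<rho> t = \<rho> 0 + (t / L) *\<^sub>R (\<rho> L - \<rho> 0)"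
proof (cases "L = 0")
  case False
  then have L: "0 < L" using t by simp
  have d1: "dist (\<rho> 0) (\<rho> t) = t" and d2: "dist (\<rho> t) (\<rho> L) = L - t" and d: "dist (\<rho> 0) (\<rho> L) = L"
    using iso t L by (auto simp: dist_norm)
  then have "between (\<rho> 0, \<rho> L) (\<rho> t)" by (simp add: between)
  then obtain u where u: "0 \<le> u" "\<rho> t = (1 - u) *\<^sub>R \<rho> 0 + u *\<^sub>R \<rho> L"
    unfolding between_mem_segment closed_segment_def by blast
  then have "\<rho> 0 - \<rho> t = u *\<^sub>R (\<rho> 0 - \<rho> L)" by (simp add: algebra_simps)
  then have "t = u * L" using d1 d u(1) by (simp add: dist_norm)
  then have "u = t / L" using L by simp
  then show ?thesis using u(2) by (simp add: algebra_simps)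
qed (use t in simp)

section \<open>Reflections and the groups they generate\<close>

lemma reflection_apply: "reflection v x = x - (2 * (x \<bullet> v) / (v \<bullet> v)) *\<^sub>R v"
  by (simp add: reflection_def)

lemma diff_reflection: "x - reflection v x = (2 * (x \<bullet> v) / (v \<bullet> v)) *\<^sub>R v"
  by (simp add: reflection_apply)

lemma reflection_inner_commute: "reflection v x \<bullet> y = x \<bullet> reflection v y"
  by (simp add: reflection_apply inner_diff_left inner_diff_right inner_commute algebra_simps)

lemma reflection_reflection: "v \<noteq> 0 \<Longrightarrow> reflection v (reflection v x) = x"
  by (simp add: reflection_apply inner_diff_left algebra_simps scaleR_diff_left)

lemma inv_reflection: "v \<noteq> 0 \<Longrightarrow> inv (reflection v) = reflection v"
  by (metis inv_unique_comp fun_eq_iff comp_apply id_apply reflection_reflection)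

lemma reflection_fixes_iff: "v \<noteq> 0 \<Longrightarrow> reflection v x = x \<longleftrightarrow> x \<bullet> v = 0"
  by (simp add: reflection_apply)

lemma reflection_scaleR: "a \<noteq> 0 \<Longrightarrow> reflection (a *\<^sub>R v) = reflection v"
  by (auto simp: fun_eq_iff reflection_apply power2_eq_square field_simps)

lemma reflection_neq_id:
  assumes "v \<noteq> 0" shows "reflection v \<noteq> id"
proof
  assume "reflection v = id"
  moreover have "reflection v v = - v" using assms by (simp add: reflection_apply scaleR_2)
  ultimately have "- v = v" by simp
  then show False using assms
    by (metis add.inverse_unique add_cancel_right_left eq_neg_iff_add_eq_0 scaleR_2
        scaleR_eq_0_iff zero_neq_numeral)
qed

lemma parallel_if_reflection_eq_minus:
  assumes "reflection v u = - u" shows "u = ((u \<bullet> v) / (v \<bullet> v)) *\<^sub>R v"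
proof -
  have "2 *\<^sub>R u = (2 * (u \<bullet> v) / (v \<bullet> v)) *\<^sub>R v"
    using assms by (simp add: reflection_apply algebra_simps scaleR_2)
  then have "(1/2) *\<^sub>R (2 *\<^sub>R u) = (1/2) *\<^sub>R ((2 * (u \<bullet> v) / (v \<bullet> v)) *\<^sub>R v)" by simp
  then show ?thesis by simp
qed

lemma orthogonal_transformation_inverse:
  fixes g :: "'a::euclidean_space \<Rightarrow> 'a"
  assumes "orthogonal_transformation g" shows "g (inv g x) = x" "inv g (g x) = x"
  using orthogonal_transformation_bij[OF assms] by (auto simp: bij_def surj_f_inv_f inv_f_f)

lemma reflection_conj:
  fixes g :: "'a::euclidean_space \<Rightarrow> 'a"
  assumes g: "orthogonal_transformation g"
  shows "g \<circ> reflection v \<circ> inv g = reflection (g v)"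
proof
  fix x
  have lin: "linear g" using g by (simp add: orthogonal_transformation_def)
  have "inv g x \<bullet> v = x \<bullet> g v"
    by (metis g orthogonal_transformation_inverse(1) orthogonal_transformation_def)
  moreover have "g v \<bullet> g v = v \<bullet> v" using g by (simp add: orthogonal_transformation_def)
  ultimately show "(g \<circ> reflection v \<circ> inv g) x = reflection (g v) x"
    by (simp add: reflection_apply linear_diff[OF lin] linear_scale[OF lin]
        orthogonal_transformation_inverse[OF g])
qed

lemma generated_comp: "f \<in> generated R \<Longrightarrow> g \<in> generated R \<Longrightarrow> f \<circ> g \<in> generated R"
  by (induction f rule: generated.induct) (auto simp: comp_assoc intro: generated.intros)

lemma generated_base: "r \<in> R \<Longrightarrow> r \<in> generated R"
  using generated.gen_step[OF _ generated.gen_id] by (metis comp_id)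

lemma generated_mono:
  assumes "R \<subseteq> R'" shows "generated R \<subseteq> generated R'"
proof
  fix f assume "f \<in> generated R"
  then show "f \<in> generated R'"
    using assms by (induction f rule: generated.induct) (auto intro: generated.intros)
qed

section \<open>Finite orthogonal groups, orbits and principal points\<close>

locale finite_orthogonal_group =
  fixes G :: "('a::euclidean_space \<Rightarrow> 'a) set"
  assumes finite_G: "finite G"
    and orthogonal_G: "\<forall>g\<in>G. orthogonal_transformation g"
    and id_in_G: "id \<in> G"
    and comp_in_G: "\<forall>f\<in>G. \<forall>g\<in>G. f \<circ> g \<in> G"
    and inv_in_G: "\<forall>g\<in>G. inv g \<in> G"
begin

lemma G_orthogonal: "g \<in> G \<Longrightarrow> orthogonal_transformation g"
  using orthogonal_G by blast

lemma G_linear: "g \<in> G \<Longrightarrow> linear g"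
  using G_orthogonal by (simp add: orthogonal_transformation_def)

lemma G_inner: "g \<in> G \<Longrightarrow> g x \<bullet> g y = x \<bullet> y"
  using G_orthogonal by (simp add: orthogonal_transformation_def)

lemma G_norm: "g \<in> G \<Longrightarrow> norm (g x) = norm x"
  using G_orthogonal by (simp add: orthogonal_transformation)

lemma G_comp: "f \<in> G \<Longrightarrow> g \<in> G \<Longrightarrow> f \<circ> g \<in> G"
  using comp_in_G by blast

lemma G_inv: "g \<in> G \<Longrightarrow> inv g \<in> G"
  using inv_in_G by blast

lemma G_f_inv_f: "g \<in> G \<Longrightarrow> g (inv g x) = x"
  using orthogonal_transformation_inverse G_orthogonal by blast

lemma G_inv_f_f: "g \<in> G \<Longrightarrow> inv g (g x) = x"
  using orthogonal_transformation_inverse G_orthogonal by blast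

lemma G_inv_inv: "g \<in> G \<Longrightarrow> inv (inv g) = g"
  using G_orthogonal orthogonal_transformation_bij inv_inv_eq by blast

lemma G_diff: "g \<in> G \<Longrightarrow> g (x - y) = g x - g y"
  using G_linear linear_diff by blast

lemma G_add: "g \<in> G \<Longrightarrow> g (x + y) = g x + g y"
  using G_linear linear_add by blast

lemma G_scaleR: "g \<in> G \<Longrightarrow> g (a *\<^sub>R x) = a *\<^sub>R g x"
  using G_linear linear_scale by blast

lemma finite_orbit: "finite (orbit G x)"
  using finite_G by (simp add: orbit_def)

lemma in_orbit_self: "x \<in> orbit G x"
  unfolding orbit_def using id_in_G by (metis id_apply image_eqI)

lemma in_orbit: "g \<in> G \<Longrightarrow> g x \<in> orbit G x"
  by (simp add: orbit_def)

lemma orbitE: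
  assumes "p \<in> orbit G x" obtains g where "g \<in> G" "p = g x"
  using assms by (auto simp: orbit_def)

lemma orbit_apply:
  assumes "g \<in> G" shows "orbit G (g x) = orbit G x"
proof
  show "orbit G (g x) \<subseteq> orbit G x"
    using assms by (auto simp: orbit_def intro!: image_eqI[where x="_ \<circ> g"] G_comp)
  show "orbit G x \<subseteq> orbit G (g x)"
  proof
    fix p assume "p \<in> orbit G x"
    then obtain h where h: "h \<in> G" "p = h x" by (rule orbitE)
    then have "p = (h \<circ> inv g) (g x)" using assms by (simp add: G_inv_f_f)
    then show "p \<in> orbit G (g x)" using h assms in_orbit by (metis G_comp G_inv)
  qed
qed

lemma orbit_eq: "p \<in> orbit G x \<Longrightarrow> orbit G p = orbit G x"
  by (metis orbit_apply orbitE)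

lemma norm_orbit: "p \<in> orbit G x \<Longrightarrow> norm p = norm x"
  by (metis G_norm orbitE)

lemma principal_iff: "x \<in> principal G \<longleftrightarrow> (\<forall>g\<in>G. g x = x \<longrightarrow> g = id)"
  using id_in_G by (auto simp: principal_def)

lemma principal_apply:
  assumes "g \<in> G" "x \<in> principal G" shows "g x \<in> principal G"
  unfolding principal_iff
proof (intro ballI impI)
  fix h assume h: "h \<in> G" "h (g x) = g x"
  then have "(inv g \<circ> h \<circ> g) x = x" using assms by (simp add: G_inv_f_f)
  then have "inv g \<circ> h \<circ> g = id" using assms h principal_iff by (meson G_comp G_inv)
  then have "g \<circ> (inv g \<circ> h \<circ> g) \<circ> inv g = g \<circ> inv g" by simp
  then show "h = id" using assms by (simp add: fun_eq_iff G_f_inv_f)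
qed

lemma principal_orbit: "x \<in> principal G \<Longrightarrow> p \<in> orbit G x \<Longrightarrow> p \<in> principal G"
  by (metis orbitE principal_apply)

text \<open>Each non-identity element fixes only a proper subspace, and finitely many of these
  cannot cover the space.\<close>

lemma ex_principal: "\<exists>x. x \<in> principal G"
proof -
  define w where "w g = (SOME w. g w \<noteq> w)" for g :: "'a \<Rightarrow> 'a"
  have w: "g (w g) \<noteq> w g" if "g \<noteq> id" for g
    using that unfolding w_def by (metis (mono_tags) eq_id_iff someI_ex)
  have "finite ((\<lambda>g. g (w g) - w g) ` (G - {id}))" using finite_G by simp
  moreover have "0 \<notin> (\<lambda>g. g (w g) - w g) ` (G - {id})"
  proof
    assume "0 \<in> (\<lambda>g. g (w g) - w g) ` (G - {id})"
    then obtain g where "g \<noteq> id" "0 = g (w g) - w g" by blast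
    then show False using w by simp
  qed
  ultimately obtain x where x: "\<forall>v\<in>(\<lambda>g. g (w g) - w g) ` (G - {id}). x \<bullet> v \<noteq> 0"
    using ex_nonorthogonal by blast
  have "x \<in> principal G" unfolding principal_iff
  proof (intro ballI impI)
    fix g assume g: "g \<in> G" "g x = x"
    show "g = id"
    proof (rule ccontr)
      assume "g \<noteq> id"
      then have "x \<bullet> (g (w g) - w g) \<noteq> 0" using x g(1) by blast
      moreover have "g (w g) \<bullet> x = w g \<bullet> x" using G_inner[OF g(1), of "w g" x] g(2) by simp
      ultimately show False by (simp add: inner_diff_right inner_commute)
    qed
  qed
  then show ?thesis by blast
qed

section \<open>Voronoi cells\<close>

lemma in_voronoi_iff: "y \<in> voronoi G p \<longleftrightarrow> (\<forall>q\<in>orbit G p. q \<noteq> p \<longrightarrow> q \<bullet> y < p \<bullet> y)"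
  by (simp add: voronoi_def)

lemma in_voronoi_self: "p \<in> voronoi G p"
proof -
  have "q \<bullet> p < p \<bullet> p" if "q \<in> orbit G p" "q \<noteq> p" for q
    using that norm_orbit by (intro inner_less_self_if_norm_eq) auto
  then show ?thesis by (simp add: voronoi_def)
qed

lemma voronoi_eq_INT: "voronoi G p = (\<Inter>q\<in>{q\<in>orbit G p. q \<noteq> p}. {y. q \<bullet> y < p \<bullet> y})"
  by (auto simp: voronoi_def)

lemma open_voronoi: "open (voronoi G p)"
proof -
  have "open {y. q \<bullet> y < p \<bullet> y}" for q :: 'a
    by (intro open_Collect_less continuous_intros)
  then show ?thesis unfolding voronoi_eq_INT using finite_orbit by (auto intro!: open_INT)
qed

lemma convex_voronoi: "convex (voronoi G p)"
proof -
  have "convex {y. q \<bullet> y < p \<bullet> y}" for q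
    using convex_halfspace_lt[of "q - p" 0] by (simp add: inner_diff_left)
  then show ?thesis unfolding voronoi_eq_INT by (auto intro!: convex_INT)
qed

lemma voronoi_disjoint:
  assumes "q \<in> orbit G p" "y \<in> voronoi G p" "y \<in> voronoi G q" shows "q = p"
  using assms unfolding in_voronoi_iff by (metis less_asym orbit_eq in_orbit_self)

lemma voronoi_subset_principal:
  assumes "x \<in> principal G" shows "voronoi G x \<subseteq> principal G"
proof
  fix y assume y: "y \<in> voronoi G x"
  show "y \<in> principal G" unfolding principal_iff
  proof (intro ballI impI)
    fix g assume g: "g \<in> G" "g y = y"
    show "g = id"
    proof (rule ccontr)
      assume "g \<noteq> id"
      then have "g x \<bullet> y < x \<bullet> y"
        using assms g y in_orbit[OF g(1)] principal_iff by (auto simp: voronoi_def)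
      moreover have "g x \<bullet> y = x \<bullet> y" using G_inner[OF g(1), of x y] g(2) by simp
      ultimately show False by simp
    qed
  qed
qed

lemma Qcell_subset_principal: "x \<in> principal G \<Longrightarrow> Qcell G x \<subseteq> principal G"
  unfolding Qcell_def using voronoi_subset_principal principal_orbit by blast

lemma voronoi_apply:
  assumes g: "g \<in> G" and y: "y \<in> voronoi G p" shows "g y \<in> voronoi G (g p)"
  unfolding voronoi_def
proof (intro CollectI ballI impI)
  fix q assume q: "q \<in> orbit G (g p)" "q \<noteq> g p"
  have "inv g q \<in> orbit G p"
    using q(1) g by (metis G_inv in_orbit orbit_eq orbit_apply)
  moreover have "inv g q \<noteq> p" using q(2) g G_f_inv_f by metis
  ultimately have "inv g q \<bullet> y < p \<bullet> y" using y by (simp add: voronoi_def)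
  then show "q \<bullet> g y < g p \<bullet> g y"
    using G_inner[OF g, of "inv g q" y] G_f_inv_f[OF g, of q] G_inner[OF g] by simp
qed

text \<open>The Voronoi cells of an orbit are disjoint open sets.\<close>

lemma connected_meets_one_voronoi:
  assumes S: "connected S" "S \<subseteq> (\<Union>p\<in>orbit G y. voronoi G p)"
    and p: "p0 \<in> orbit G y" "p1 \<in> orbit G y"
    and ab: "a \<in> S" "a \<in> voronoi G p0" "b \<in> S" "b \<in> voronoi G p1"
  shows "p0 = p1"
proof (rule ccontr)
  assume "p0 \<noteq> p1"
  define E where "E = (\<Union>p\<in>orbit G y - {p0}. voronoi G p)"
  have "open E" unfolding E_def using open_voronoi by blast
  moreover have "voronoi G p0 \<inter> E \<inter> S = {}"
  proof (rule ccontr)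
    assume "voronoi G p0 \<inter> E \<inter> S \<noteq> {}"
    then obtain w p where "w \<in> voronoi G p0" "p \<in> orbit G y" "p \<noteq> p0" "w \<in> voronoi G p"
      unfolding E_def by blast
    moreover have "p \<in> orbit G p0" using p \<open>p \<in> orbit G y\<close> orbit_eq by metis
    ultimately show False using voronoi_disjoint by blast
  qed
  moreover have "S \<subseteq> voronoi G p0 \<union> E" using S(2) unfolding E_def by blast
  ultimately have "voronoi G p0 \<inter> S = {} \<or> E \<inter> S = {}"
    using connectedD[OF S(1) open_voronoi] by blast
  moreover have "b \<in> E" using ab p \<open>p0 \<noteq> p1\<close> unfolding E_def by blast
  ultimately show False using ab by blast
qed

section \<open>Quotient distance\<close>

lemma qdist_orbit_le:
  "p \<in> orbit G a \<Longrightarrow> q \<in> orbit G b \<Longrightarrow> qdist (orbit G a) (orbit G b) \<le> norm (p - q)"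
  unfolding qdist_def by (rule cInf_lower) (auto intro: bdd_belowI[where m=0])

lemma qdist_orbit_attained: "\<exists>g\<in>G. qdist (orbit G a) (orbit G b) = norm (a - g b)"
proof -
  let ?D = "{norm (p - q) | p q. p \<in> orbit G a \<and> q \<in> orbit G b}"
  have "?D = (\<lambda>(p,q). norm (p - q)) ` (orbit G a \<times> orbit G b)" by auto
  then have fin: "finite ?D" using finite_orbit by simp
  have ne: "?D \<noteq> {}" using in_orbit_self by blast
  obtain p q where pq: "p \<in> orbit G a" "q \<in> orbit G b"
    "qdist (orbit G a) (orbit G b) = norm (p - q)"
    using Min_in[OF fin ne] cInf_eq_Min[OF fin ne] unfolding qdist_def by auto
  obtain h where h: "h \<in> G" "p = h a" using pq(1) by (rule orbitE)
  obtain k where k: "k \<in> G" "q = k b" using pq(2) by (rule orbitE)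
  have "norm (p - q) = norm (inv h (p - q))" using h G_inv G_norm by metis
  also have "inv h (p - q) = a - (inv h \<circ> k) b" using h k by (simp add: G_diff G_inv G_inv_f_f)
  finally show ?thesis using pq h k by (metis G_comp G_inv)
qed

lemma qdist_orbit_commute: "qdist (orbit G a) (orbit G b) = qdist (orbit G b) (orbit G a)"
proof -
  have "{norm (p - q) | p q. p \<in> orbit G a \<and> q \<in> orbit G b}
      = {norm (p - q) | p q. p \<in> orbit G b \<and> q \<in> orbit G a}"
    by (auto, (metis norm_minus_commute)+)
  then show ?thesis by (simp add: qdist_def)
qed

lemma qdist_orbit_triangle:
  "qdist (orbit G a) (orbit G c) \<le> qdist (orbit G a) (orbit G b) + qdist (orbit G b) (orbit G c)"
proof -
  obtain g where g: "g \<in> G" "qdist (orbit G a) (orbit G b) = norm (a - g b)"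
    using qdist_orbit_attained by blast
  obtain h where h: "h \<in> G" "qdist (orbit G b) (orbit G c) = norm (b - h c)"
    using qdist_orbit_attained by blast
  have "qdist (orbit G a) (orbit G c) \<le> norm (a - g (h c))"
    using qdist_orbit_le[OF in_orbit_self] in_orbit g h by (metis G_comp comp_apply)
  also have "\<dots> \<le> norm (a - g b) + norm (g b - g (h c))" by (rule norm_diff_triangle_le) auto
  also have "norm (g b - g (h c)) = norm (b - h c)" using g by (metis G_diff G_norm)
  finally show ?thesis using g h by simp
qed

lemma qdist_orbit_eq_if_max_inner:
  assumes q: "q \<in> orbit G x" and max: "\<forall>p\<in>orbit G x. p \<bullet> z \<le> q \<bullet> z"
  shows "qdist (orbit G z) (orbit G x) = norm (z - q)"
proof -
  obtain g where g: "g \<in> G" "qdist (orbit G z) (orbit G x) = norm (z - g x)"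
    using qdist_orbit_attained by blast
  have "norm (z - q) \<le> norm (z - g x)"
    using norm_diff_le_if_inner_le[of "g x" q z] q max in_orbit[OF g(1)] norm_orbit by metis
  moreover have "qdist (orbit G z) (orbit G x) \<le> norm (z - q)"
    using qdist_orbit_le[OF in_orbit_self] q orbit_eq by metis
  ultimately show ?thesis using g by simp
qed

section \<open>The invariant \<open>\<chi>\<close> and the sets \<open>Q\<^sub>x\<close>\<close>

lemma card_Sset_le_chi:
  assumes "x \<in> principal G" "y \<in> principal G" shows "card (Sset G x y) \<le> chi G"
proof -
  have card_le: "card (Sset G x y) \<le> card G" for x y
  proof -
    have "Sset G x y \<subseteq> orbit G y" by (auto simp: Sset_def)
    then have "card (Sset G x y) \<le> card (orbit G y)" using finite_orbit card_mono by blast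
    also have "\<dots> \<le> card G" unfolding orbit_def by (rule card_image_le[OF finite_G])
    finally show ?thesis .
  qed
  have "{card (Sset G x y) | x y. x \<in> principal G \<and> y \<in> principal G} \<subseteq> {..card G}"
    using card_le by auto
  then have "finite {card (Sset G x y) | x y. x \<in> principal G \<and> y \<in> principal G}"
    using finite_subset by blast
  then show ?thesis unfolding chi_def using assms by (intro Max_ge) blast+
qed

lemma chi_eq_1_if_card_Sset_eq_1:
  assumes "\<forall>x\<in>principal G. \<forall>y\<in>principal G. card (Sset G x y) = 1" shows "chi G = 1"
proof -
  define C where "C = {card (Sset G x y) | x y. x \<in> principal G \<and> y \<in> principal G}"
  have "C \<subseteq> {1}" using assms unfolding C_def by auto
  moreover have "C \<noteq> {}" unfolding C_def using ex_principal by blast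
  ultimately have "C = {1}" by blast
  then show ?thesis unfolding chi_def C_def[symmetric] by simp
qed

lemma card_Sset_eq_1_if_principal_subset_Qcell:
  assumes Q: "\<forall>x\<in>principal G. principal G \<subseteq> Qcell G x"
    and x: "x \<in> principal G" and y: "y \<in> principal G"
  shows "card (Sset G x y) = 1"
proof -
  have cover: "voronoi G x \<subseteq> (\<Union>p\<in>orbit G y. voronoi G p)"
    using voronoi_subset_principal[OF x] Q y unfolding Qcell_def by blast
  then obtain q0 where q0: "q0 \<in> orbit G y" "x \<in> voronoi G q0" using in_voronoi_self by blast
  have "q = q0" if q: "q \<in> Sset G x y" for q
  proof -
    obtain w where w: "w \<in> voronoi G q" "w \<in> voronoi G x" "q \<in> orbit G y"
      using q by (auto simp: Sset_def)
    show ?thesis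
      using connected_meets_one_voronoi[OF convex_connected[OF convex_voronoi] cover q0(1) w(3)
          in_voronoi_self q0(2) w(2) w(1)] by simp
  qed
  moreover have "q0 \<in> Sset G x y" using q0 in_voronoi_self[of x] by (auto simp: Sset_def)
  ultimately have "Sset G x y = {q0}" by blast
  then show ?thesis by simp
qed

text \<open>A maximiser \<open>q\<close> of \<open>\<langle>-, z\<rangle>\<close> on an orbit shares a Voronoi cell with \<open>z\<close>:
  both cells contain \<open>z + e q\<close> for small \<open>e > 0\<close>.\<close>

lemma max_inner_in_Sset:
  assumes z: "z \<in> principal G" and q: "q \<in> orbit G x" and max: "\<forall>p\<in>orbit G x. p \<bullet> z \<le> q \<bullet> z"
  shows "q \<in> Sset G z x"
proof -
  define c where "c p = (z - p) \<bullet> q" for p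
  have pos: "\<forall>p\<in>orbit G z - {z}. 0 < ((z - p) \<bullet> z) / (\<bar>c p\<bar> + 1)"
  proof
    fix p assume p: "p \<in> orbit G z - {z}"
    have "p \<bullet> z < z \<bullet> z" using inner_less_self_if_norm_eq p norm_orbit by blast
    then show "0 < ((z - p) \<bullet> z) / (\<bar>c p\<bar> + 1)" by (simp add: inner_diff_left)
  qed
  obtain e where e: "e > 0" "\<forall>p\<in>orbit G z - {z}. e < ((z - p) \<bullet> z) / (\<bar>c p\<bar> + 1)"
    using ex_pos_below_finite[OF _ pos, of 1] finite_orbit by auto
  have "z + e *\<^sub>R q \<in> voronoi G z" unfolding in_voronoi_iff
  proof (intro ballI impI)
    fix p assume p: "p \<in> orbit G z" "p \<noteq> z"
    then have "e * \<bar>c p\<bar> + e < z \<bullet> z - p \<bullet> z"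
      using e(2) by (simp add: pos_less_divide_eq add_pos_nonneg distrib_left inner_diff_left)
    moreover have "- (e * \<bar>c p\<bar>) \<le> e * c p"
      using e(1) by (metis abs_ge_minus_self abs_minus_cancel abs_mult abs_of_pos minus_le_iff
          mult_le_cancel_left_pos)
    ultimately have "0 < z \<bullet> z - p \<bullet> z + e * c p" using e(1) by linarith
    then show "p \<bullet> (z + e *\<^sub>R q) < z \<bullet> (z + e *\<^sub>R q)"
      by (simp add: c_def inner_diff_left inner_add_right algebra_simps)
  qed
  moreover have "z + e *\<^sub>R q \<in> voronoi G q" unfolding in_voronoi_iff
  proof (intro ballI impI)
    fix p assume p: "p \<in> orbit G q" "p \<noteq> q"
    then have "p \<bullet> z \<le> q \<bullet> z" using max q orbit_eq by metis
    moreover have "p \<bullet> q < q \<bullet> q" using inner_less_self_if_norm_eq p norm_orbit by metis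
    ultimately show "p \<bullet> (z + e *\<^sub>R q) < q \<bullet> (z + e *\<^sub>R q)"
      using e(1) by (simp add: inner_add_right add_le_less_mono)
  qed
  ultimately show ?thesis using q by (auto simp: Sset_def)
qed

lemma two_max_inner_if_notin_Qcell:
  assumes "z \<notin> Qcell G x"
  obtains q1 q2 where "q1 \<in> orbit G x" "q2 \<in> orbit G x" "q1 \<noteq> q2"
    "\<forall>p\<in>orbit G x. p \<bullet> z \<le> q1 \<bullet> z" "q2 \<bullet> z = q1 \<bullet> z"
proof -
  have "orbit G x \<noteq> {}" using in_orbit_self by blast
  then obtain q1 where q1: "q1 \<in> orbit G x" "\<forall>p\<in>orbit G x. p \<bullet> z \<le> q1 \<bullet> z"
    using ex_max_on_finite[OF finite_orbit, of x "\<lambda>p. p \<bullet> z"] by blast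
  have "z \<notin> voronoi G q1" using assms q1(1) by (auto simp: Qcell_def)
  then obtain q2 where q2: "q2 \<in> orbit G q1" "q2 \<noteq> q1" "\<not> q2 \<bullet> z < q1 \<bullet> z"
    by (auto simp: in_voronoi_iff)
  have q2x: "q2 \<in> orbit G x" using q2(1) q1(1) orbit_eq by metis
  then have "q2 \<bullet> z = q1 \<bullet> z" using q2(3) q1(2) by force
  then show ?thesis using that q1 q2x q2(2) by metis
qed

lemma in_Qcell_if_chi_eq_1:
  assumes chi: "chi G = 1" and x: "x \<in> principal G" and z: "z \<in> principal G"
  shows "z \<in> Qcell G x"
proof (rule ccontr)
  assume "z \<notin> Qcell G x"
  then obtain q1 q2 where q: "q1 \<in> orbit G x" "q2 \<in> orbit G x" "q1 \<noteq> q2"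
    "\<forall>p\<in>orbit G x. p \<bullet> z \<le> q1 \<bullet> z" "q2 \<bullet> z = q1 \<bullet> z" by (rule two_max_inner_if_notin_Qcell)
  have "q1 \<in> Sset G z x" using max_inner_in_Sset[OF z q(1) q(4)] .
  moreover have "q2 \<in> Sset G z x" using max_inner_in_Sset[OF z q(2)] q(4,5) by simp
  moreover have "finite (Sset G z x)"
    using finite_orbit[of x] by (rule finite_subset[rotated]) (auto simp: Sset_def)
  ultimately have "card {q1, q2} \<le> card (Sset G z x)" by (intro card_mono) auto
  then have "2 \<le> card (Sset G z x)" using q(3) by simp
  then show False using card_Sset_le_chi[OF z x] chi by simp
qed

section \<open>Minimal geodesics along segments\<close>

definition orbit_segment :: "'a \<Rightarrow> 'a \<Rightarrow> real \<Rightarrow> real \<Rightarrow> 'a set" where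
  "orbit_segment z q L t = (if t \<in> {0..L} then orbit G (z + (t / L) *\<^sub>R (q - z)) else {})"

text \<open>A segment realising the quotient distance projects to a minimal geodesic: by the triangle
  inequality, no sub-segment can be shortened in the quotient.\<close>

lemma orbit_segment_in_min_geodesics:
  assumes q: "q \<in> orbit G y" and L: "L = norm (z - q)" and qd: "qdist (orbit G z) (orbit G y) = L"
  shows "(L, orbit_segment z q L) \<in> min_geodesics G (orbit G z) (orbit G y)"
proof -
  define a where "a t = z + (t / L) *\<^sub>R (q - z)" for t
  have dist_a: "norm (a s - a t) = \<bar>s - t\<bar>" if "s \<in> {0..L}" "t \<in> {0..L}" for s t
  proof (cases "L = 0")
    case False
    have "a s - a t = ((s - t) / L) *\<^sub>R (q - z)"
      by (simp add: a_def algebra_simps diff_divide_distrib)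
    then show ?thesis using False L by (simp add: norm_minus_commute)
  qed (use that in simp)
  have a0: "a 0 = z" by (simp add: a_def)
  have aL: "orbit G (a L) = orbit G y"
  proof (cases "L = 0")
    case True
    then have "z = q" using L by simp
    then show ?thesis using orbit_eq[OF q] True by (simp add: a_def)
  qed (use orbit_eq[OF q] in \<open>simp add: a_def\<close>)
  have le: "qdist (orbit G (a s)) (orbit G (a t)) \<le> \<bar>s - t\<bar>" if "s \<in> {0..L}" "t \<in> {0..L}" for s t
    using qdist_orbit_le[OF in_orbit_self in_orbit_self] dist_a[OF that] by metis
  have eq: "qdist (orbit G (a s)) (orbit G (a t)) = t - s"
    if st: "s \<in> {0..L}" "t \<in> {0..L}" "s \<le> t" for s t
  proof -
    have "L \<le> qdist (orbit G z) (orbit G (a s)) + qdist (orbit G (a s)) (orbit G (a t))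
        + qdist (orbit G (a t)) (orbit G y)"
      using qd qdist_orbit_triangle[of z y "a s"] qdist_orbit_triangle[of "a s" y "a t"]
      by linarith
    then show ?thesis using le[of 0 s] le[of s t] le[of t L] st a0 aL by auto
  qed
  have "qdist (orbit_segment z q L s) (orbit_segment z q L t) = \<bar>s - t\<bar>"
    if "s \<in> {0..L}" "t \<in> {0..L}" for s t
    using eq[of s t] eq[of t s] that qdist_orbit_commute
    by (cases "s \<le> t") (simp_all add: orbit_segment_def a_def)
  then show ?thesis
    using a0 aL L by (simp add: min_geodesics_def orbit_segment_def quot_space_def a_def)
qed

text \<open>If the two orbits agreed at a small time \<open>t\<close>, some \<open>g \<in> G\<close> would move \<open>z\<close> by at
  most \<open>2 t\<close>, which for \<open>g \<noteq> id\<close> is less than the distance from \<open>z\<close> to \<open>g z\<close>.\<close>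

lemma orbit_segments_differ:
  assumes z: "z \<in> principal G" and q: "q1 \<noteq> q2" "norm (z - q1) = L" "norm (z - q2) = L"
    and L: "0 < L"
  shows "orbit_segment z q1 L \<noteq> orbit_segment z q2 L"
proof
  assume eq: "orbit_segment z q1 L = orbit_segment z q2 L"
  have pos: "\<forall>g\<in>G - {id}. 0 < norm (g z - z) / 2" using z principal_iff by auto
  obtain t where t: "t > 0" "t \<le> L" "\<forall>g\<in>G - {id}. t < norm (g z - z) / 2"
    using ex_pos_below_finite[OF _ pos L] finite_G by auto
  define a1 where "a1 = z + (t / L) *\<^sub>R (q1 - z)"
  define a2 where "a2 = z + (t / L) *\<^sub>R (q2 - z)"
  have "orbit_segment z q1 L t = orbit_segment z q2 L t" using eq by simp
  then have "orbit G a1 = orbit G a2" using t by (simp add: orbit_segment_def a1_def a2_def)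
  then have "a2 \<in> orbit G a1" using in_orbit_self by metis
  then obtain g where g: "g \<in> G" "a2 = g a1" by (rule orbitE)
  have "g a1 = g z + (t / L) *\<^sub>R g (q1 - z)" unfolding a1_def using g(1)
    by (simp only: G_add G_scaleR)
  then have "z + (t / L) *\<^sub>R (q2 - z) = g z + (t / L) *\<^sub>R g (q1 - z)" using g(2) a2_def by simp
  then have "g z - z = (t / L) *\<^sub>R (q2 - z) - (t / L) *\<^sub>R g (q1 - z)" by (simp add: algebra_simps)
  then have "norm (g z - z) \<le> norm ((t / L) *\<^sub>R (q2 - z)) + norm ((t / L) *\<^sub>R g (q1 - z))"
    by (simp only: norm_triangle_ineq4)
  also have "\<dots> = (t / L) * norm (q2 - z) + (t / L) * norm (g (q1 - z))"
    using t L by simp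
  also have "\<dots> = 2 * t"
    using q G_norm[OF g(1)] L by (simp add: norm_minus_commute)
  finally have "norm (g z - z) \<le> 2 * t" .
  moreover have "g \<noteq> id" using g q(1) t L by (auto simp: a1_def a2_def)
  then have "t < norm (g z - z) / 2" using t(3) g(1) by blast
  ultimately show False by linarith
qed

lemma in_Qcell_if_unique_geodesics:
  assumes unique: "\<forall>x y. card (min_geodesics G (orbit G x) (orbit G y)) = 1"
    and x: "x \<in> principal G" and z: "z \<in> principal G"
  shows "z \<in> Qcell G x"
proof (rule ccontr)
  assume "z \<notin> Qcell G x"
  then obtain q1 q2 where q: "q1 \<in> orbit G x" "q2 \<in> orbit G x" "q1 \<noteq> q2"
    "\<forall>p\<in>orbit G x. p \<bullet> z \<le> q1 \<bullet> z" "q2 \<bullet> z = q1 \<bullet> z" by (rule two_max_inner_if_notin_Qcell)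
  define L where "L = norm (z - q1)"
  have L2: "norm (z - q2) = L"
    unfolding L_def using norm_diff_eq_if_inner_eq[of q2 q1 z] q norm_orbit by metis
  have "L > 0" using q(3) L2 by (auto simp: L_def)
  have qd: "qdist (orbit G z) (orbit G x) = L"
    unfolding L_def using qdist_orbit_eq_if_max_inner q(1,4) .
  have "(L, orbit_segment z q1 L) \<in> min_geodesics G (orbit G z) (orbit G x)"
    "(L, orbit_segment z q2 L) \<in> min_geodesics G (orbit G z) (orbit G x)"
    using orbit_segment_in_min_geodesics[OF q(1) L_def qd]
      orbit_segment_in_min_geodesics[OF q(2) L2[symmetric] qd] by auto
  moreover have "orbit_segment z q1 L \<noteq> orbit_segment z q2 L"
    using orbit_segments_differ[OF z q(3)] L_def L2 \<open>L > 0\<close> by blast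
  moreover obtain e where "min_geodesics G (orbit G z) (orbit G x) = {e}"
    using unique card_1_singletonE by blast
  ultimately show False by auto
qed

end

section \<open>Reflections in \<open>G\<close> and chambers\<close>

lemma inner_nonneg_if_reflection_le:
  fixes a y n :: "'a::real_inner"
  assumes "n \<noteq> 0" "a \<bullet> reflection n y \<le> a \<bullet> y" "0 < a \<bullet> n"
  shows "0 \<le> y \<bullet> n"
proof (rule ccontr)
  assume "\<not> 0 \<le> y \<bullet> n"
  then have "2 * (y \<bullet> n) / (n \<bullet> n) < 0" using assms(1) by (simp add: divide_neg_pos)
  then have "(2 * (y \<bullet> n) / (n \<bullet> n)) * (a \<bullet> n) < 0" using assms(3) by (rule mult_neg_pos)
  moreover have "a \<bullet> reflection n y = a \<bullet> y - (2 * (y \<bullet> n) / (n \<bullet> n)) * (a \<bullet> n)"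
    by (simp add: reflection_apply inner_diff_right)
  ultimately show False using assms(2) by linarith
qed

lemma subspace_fixed_points:
  fixes h :: "'a::real_vector \<Rightarrow> 'a"
  assumes "linear h" shows "subspace {x. h x = x}"
  using assms unfolding subspace_def by (simp add: linear_0 linear_add linear_scale)

lemma orthogonal_transformation_fixing_hyperplane_normal:
  fixes h :: "'a::euclidean_space \<Rightarrow> 'a"
  assumes h: "orthogonal_transformation h" and v: "v \<noteq> 0"
    and fixed: "\<And>x. v \<bullet> x = 0 \<Longrightarrow> h x = x"
  obtains l where "h v = l *\<^sub>R v" "\<bar>l\<bar> = 1"
proof -
  have vv: "v \<bullet> v \<noteq> 0" using v by simp
  define l where "l = (h v \<bullet> v) / (v \<bullet> v)"
  define w where "w = h v - l *\<^sub>R v"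
  have wv: "v \<bullet> w = 0" unfolding w_def l_def using vv by (simp add: inner_diff_right inner_commute)
  have "h v \<bullet> h w = v \<bullet> w" using h by (simp add: orthogonal_transformation_def)
  then have "h v \<bullet> w = 0" using fixed[OF wv] wv by simp
  then have "w \<bullet> w = 0" using wv unfolding w_def by (simp add: inner_diff_left inner_commute)
  then have hv: "h v = l *\<^sub>R v" unfolding w_def by simp
  have "norm (h v) = norm v" using h by (simp add: orthogonal_transformation)
  then have "\<bar>l\<bar> = 1" using hv v by simp
  then show thesis using that hv by blast
qed

lemma orthogonal_transformation_fixing_hyperplane:
  fixes h :: "'a::euclidean_space \<Rightarrow> 'a"
  assumes h: "orthogonal_transformation h" and v: "v \<noteq> 0"
    and fixed: "\<And>x. v \<bullet> x = 0 \<Longrightarrow> h x = x"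
  shows "h = id \<or> h = reflection v"
proof -
  have lin: "linear h" using h by (simp add: orthogonal_transformation_def)
  have vv: "v \<bullet> v \<noteq> 0" using v by simp
  obtain l where hv: "h v = l *\<^sub>R v" and "\<bar>l\<bar> = 1"
    using orthogonal_transformation_fixing_hyperplane_normal[OF h v fixed] by blast
  have decomp: "h x = (x - ((x \<bullet> v) / (v \<bullet> v)) *\<^sub>R v) + ((x \<bullet> v) / (v \<bullet> v) * l) *\<^sub>R v" for x
  proof -
    let ?m = "(x \<bullet> v) / (v \<bullet> v)"
    have "v \<bullet> (x - ?m *\<^sub>R v) = 0" using vv by (simp add: inner_diff_right inner_commute)
    then have "h (x - ?m *\<^sub>R v) = x - ?m *\<^sub>R v" by (rule fixed)
    moreover have "h ((x - ?m *\<^sub>R v) + ?m *\<^sub>R v) = h (x - ?m *\<^sub>R v) + ?m *\<^sub>R h v"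
      by (simp only: linear_add[OF lin] linear_scale[OF lin])
    ultimately show ?thesis using hv by simp
  qed
  show ?thesis
  proof (cases "l = 1")
    case True
    then show ?thesis using decomp by (auto simp: fun_eq_iff)
  next
    case False
    then have "l = -1" using \<open>\<bar>l\<bar> = 1\<close> by linarith
    have "h x = reflection v x" for x
    proof -
      define m where "m = (x \<bullet> v) / (v \<bullet> v)"
      have m2: "2 * (x \<bullet> v) / (v \<bullet> v) = m + m"
        unfolding m_def by (rule sym, rule add_divide_distrib[symmetric, THEN trans]) simp
      have "h x = (x - m *\<^sub>R v) + (m * l) *\<^sub>R v" using decomp[of x] unfolding m_def .
      also have "(m * l) *\<^sub>R v = - (m *\<^sub>R v)" using \<open>l = -1\<close> by simp
      also have "(x - m *\<^sub>R v) + - (m *\<^sub>R v) = x - (m + m) *\<^sub>R v"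
        by (simp only: scaleR_add_left diff_conv_add_uminus minus_add add.assoc)
      also have "\<dots> = reflection v x" unfolding reflection_apply m2 ..
      finally show ?thesis .
    qed
    then show ?thesis by (simp add: fun_eq_iff)
  qed
qed

text \<open>The segments from \<open>c \<notin> F\<close> meet the subspace \<open>F\<close> only for \<open>r\<close> in
  \<open>span (insert c F)\<close>.\<close>

lemma negligible_segments_meeting_subspace:
  fixes c :: "'a::euclidean_space"
  assumes F: "subspace F" and c: "c \<notin> F" and dim: "dim F + 1 < DIM('a)"
  shows "negligible {r. \<exists>s\<in>{0..1}. (1 - s) *\<^sub>R c + s *\<^sub>R r \<in> F}"
proof -
  have "{r. \<exists>s\<in>{0..1}. (1 - s) *\<^sub>R c + s *\<^sub>R r \<in> F} \<subseteq> span (insert c F)"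
  proof
    fix r assume "r \<in> {r. \<exists>s\<in>{0..1}. (1 - s) *\<^sub>R c + s *\<^sub>R r \<in> F}"
    then obtain s where s: "s \<in> {0..1}" "(1 - s) *\<^sub>R c + s *\<^sub>R r \<in> F" by blast
    have "s \<noteq> 0" using s c by auto
    have "(1 / s) *\<^sub>R ((1 - s) *\<^sub>R c + s *\<^sub>R r) = ((1 - s) / s) *\<^sub>R c + r"
      using \<open>s \<noteq> 0\<close> by (simp add: scaleR_add_right)
    then have "r = (1 / s) *\<^sub>R ((1 - s) *\<^sub>R c + s *\<^sub>R r) - ((1 - s) / s) *\<^sub>R c" by simp
    moreover have "(1 - s) *\<^sub>R c + s *\<^sub>R r \<in> span (insert c F)"
      using s(2) by (meson span_base span_mono subset_insertI subsetD)
    moreover have "c \<in> span (insert c F)" by (simp add: span_base)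
    ultimately show "r \<in> span (insert c F)" by (metis span_diff span_scale)
  qed
  moreover have "dim (span (insert c F)) \<le> dim F + 1" by (simp add: dim_span dim_insert)
  then have "negligible (span (insert c F))" using dim by (intro negligible_lowdim) simp
  ultimately show ?thesis using negligible_subset by blast
qed

context finite_orthogonal_group
begin

definition reflections :: "('a \<Rightarrow> 'a) set" where
  "reflections = {g\<in>G. \<exists>v. v \<noteq> 0 \<and> g = reflection v}"

lemma reflections_subset_G: "reflections \<subseteq> G"
  by (auto simp: reflections_def)

lemma reflections_in_G: "t \<in> reflections \<Longrightarrow> t \<in> G"
  by (auto simp: reflections_def)

lemma finite_reflections: "finite reflections"
  using finite_G reflections_subset_G finite_subset by blast

lemma reflectionsE:
  assumes "t \<in> reflections" obtains v where "v \<noteq> 0" "t = reflection v"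
  using assms by (auto simp: reflections_def)

lemma reflections_involution: "t \<in> reflections \<Longrightarrow> t (t x) = x"
  by (metis reflectionsE reflection_reflection)

lemma reflections_comp_self: "t \<in> reflections \<Longrightarrow> t \<circ> t = id"
  by (simp add: fun_eq_iff reflections_involution)

lemma reflections_inner_commute: "t \<in> reflections \<Longrightarrow> t x \<bullet> y = x \<bullet> t y"
  by (metis reflectionsE reflection_inner_commute)

lemma reflections_inv: "t \<in> reflections \<Longrightarrow> inv t = t"
  by (metis reflectionsE inv_reflection)

lemma reflections_conj:
  assumes "g \<in> G" "t \<in> reflections" shows "g \<circ> t \<circ> inv g \<in> reflections"
proof -
  obtain v where v: "v \<noteq> 0" "t = reflection v" using assms(2) by (rule reflectionsE)
  then have "g \<circ> t \<circ> inv g = reflection (g v)"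
    using reflection_conj[OF G_orthogonal[OF assms(1)]] by simp
  moreover have "g v \<noteq> 0" using v(1) G_norm[OF assms(1), of v] by auto
  moreover have "g \<circ> t \<circ> inv g \<in> G" using assms reflections_in_G by (simp add: G_comp G_inv)
  ultimately show ?thesis unfolding reflections_def by blast
qed

lemma reflections_conj_reflection:
  "s \<in> reflections \<Longrightarrow> t \<in> reflections \<Longrightarrow> s \<circ> t \<circ> s \<in> reflections"
  using reflections_conj[OF reflections_in_G] reflections_inv by metis

lemma inj_on_conj_reflection:
  assumes "s \<in> reflections" shows "inj_on (\<lambda>r. s \<circ> r \<circ> s) A"
proof (rule inj_onI)
  fix r r' assume "s \<circ> r \<circ> s = s \<circ> r' \<circ> s"
  then have "s (s (r (s (s y)))) = s (s (r' (s (s y))))" for y by (metis comp_apply)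
  then show "r = r'" using reflections_involution[OF assms] by (simp add: fun_eq_iff)
qed

lemma generated_subset_G:
  assumes "R \<subseteq> G" shows "generated R \<subseteq> G"
proof
  fix f assume "f \<in> generated R"
  then show "f \<in> G" using assms by (induction f rule: generated.induct) (auto simp: id_in_G G_comp)
qed

lemma inv_in_generated_reflections:
  assumes "R \<subseteq> reflections" "f \<in> generated R" shows "inv f \<in> generated R"
  using assms(2)
proof (induction f rule: generated.induct)
  case gen_id
  then show ?case by (subst inv_id) (rule generated.gen_id)
next
  case (gen_step r f)
  have "r \<in> G" "f \<in> G"
    using gen_step.hyps assms(1) generated_subset_G reflections_subset_G by blast+
  then have "inv (r \<circ> f) = inv f \<circ> inv r"
    using o_inv_distrib orthogonal_transformation_bij G_orthogonal by blast
  also have "inv r = r" using gen_step.hyps(1) assms(1) reflections_inv by blast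
  finally show ?case using gen_step generated_comp generated_base by metis
qed

lemma generated_reflections_if_reflection_group:
  assumes "reflection_group G" shows "G = generated reflections"
proof -
  obtain R where R: "\<forall>r\<in>R. \<exists>v. v \<noteq> 0 \<and> r = reflection v" "G = generated R"
    using assms unfolding reflection_group_def by blast
  have "R \<subseteq> generated R" using generated_base by blast
  then have "R \<subseteq> reflections" using R unfolding reflections_def by blast
  then have "generated R \<subseteq> generated reflections" by (rule generated_mono)
  then show ?thesis using R(2) generated_subset_G[OF reflections_subset_G] by blast
qed

lemma fixed_space_dim_if_not_reflection:
  assumes h: "h \<in> G" "h \<noteq> id" "h \<notin> reflections"
  shows "dim {x. h x = x} + 1 < DIM('a)"
proof (rule ccontr)
  define F where "F = {x. h x = x}"
  assume "\<not> dim {x. h x = x} + 1 < DIM('a)"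
  then have dF: "DIM('a) \<le> dim F + 1" unfolding F_def by simp
  have sF: "subspace F" unfolding F_def by (rule subspace_fixed_points[OF G_linear[OF h(1)]])
  have "dim F < DIM('a)"
  proof (rule ccontr)
    assume "\<not> dim F < DIM('a)"
    then have "span F = UNIV" using dim_subset_UNIV[of F] dim_eq_full by (metis le_antisym not_le)
    then have "F = UNIV" using sF span_eq_iff by metis
    then show False using h(2) unfolding F_def by (auto simp: fun_eq_iff)
  qed
  then obtain v where v: "v \<noteq> 0" "\<And>y. y \<in> span F \<Longrightarrow> orthogonal v y"
    using orthogonal_to_subspace_exists by blast
  define H where "H = {x. v \<bullet> x = 0}"
  have "F \<subseteq> H" using v(2) span_base unfolding H_def orthogonal_def by blast
  moreover have "dim H = DIM('a) - 1" unfolding H_def using dim_hyperplane[OF v(1)] .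
  ultimately have "F = H" using subspace_dim_equal[OF sF subspace_hyperplane] dF unfolding H_def
    by simp
  then have "h = id \<or> h = reflection v"
    using orthogonal_transformation_fixing_hyperplane[OF G_orthogonal[OF h(1)] v(1)]
    unfolding F_def H_def by blast
  then show False using h v(1) by (auto simp: reflections_def)
qed

definition regular :: "'a \<Rightarrow> bool" where
  "regular x \<longleftrightarrow> (\<forall>t\<in>reflections. t x \<noteq> x)"

text \<open>For regular \<open>c\<close>, \<open>mirror_normal c t\<close> is the normal of the mirror of \<open>t\<close> pointing to
  the side of \<open>c\<close>.\<close>

definition mirror_normal :: "'a \<Rightarrow> ('a \<Rightarrow> 'a) \<Rightarrow> 'a" where
  "mirror_normal c t = c - t c"

definition chamber :: "'a \<Rightarrow> 'a set" where
  "chamber c = {u. \<forall>t\<in>reflections. 0 < u \<bullet> mirror_normal c t}"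

definition closed_chamber :: "'a \<Rightarrow> 'a set" where
  "closed_chamber c = {u. \<forall>t\<in>reflections. 0 \<le> u \<bullet> mirror_normal c t}"

lemma regular_if_principal:
  assumes "x \<in> principal G" shows "regular x"
  unfolding regular_def
proof
  fix t assume t: "t \<in> reflections"
  then obtain v where "v \<noteq> 0" "t = reflection v" by (rule reflectionsE)
  then have "t \<noteq> id" using reflection_neq_id by simp
  then show "t x \<noteq> x" using assms t reflections_in_G principal_iff by blast
qed

lemma regular_apply:
  assumes g: "g \<in> G" and x: "regular x" shows "regular (g x)"
  unfolding regular_def
proof
  fix t assume t: "t \<in> reflections"
  show "t (g x) \<noteq> g x"
  proof
    assume "t (g x) = g x"
    then have "(inv g \<circ> t \<circ> g) x = x" using g by (simp add: G_inv_f_f)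
    moreover have "inv g \<circ> t \<circ> g \<in> reflections"
      using reflections_conj[OF G_inv[OF g] t] G_inv_inv[OF g] by simp
    ultimately show False using x unfolding regular_def by blast
  qed
qed

lemma inner_mirror_normal:
  "t \<in> reflections \<Longrightarrow> c \<bullet> mirror_normal c t = (mirror_normal c t \<bullet> mirror_normal c t) / 2"
  using G_inner[OF reflections_in_G, of t c c]
  by (simp add: mirror_normal_def inner_diff_left inner_diff_right inner_commute)

lemma reflection_mirror_normal:
  assumes "t \<in> reflections" shows "t (mirror_normal c t) = - mirror_normal c t"
  unfolding mirror_normal_def
    using reflections_involution[OF assms] G_diff[OF reflections_in_G[OF assms]]
  by simp

lemma mirror_normal_reflection:
  assumes c: "regular c" and t: "t \<in> reflections"
  shows "mirror_normal c t \<noteq> 0" "t = reflection (mirror_normal c t)"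
proof -
  obtain v where v: "v \<noteq> 0" "t = reflection v" using t by (rule reflectionsE)
  have "c \<bullet> v \<noteq> 0" using c t reflection_fixes_iff[OF v(1)] v(2) unfolding regular_def by blast
  then have k: "2 * (c \<bullet> v) / (v \<bullet> v) \<noteq> 0" using v(1) by simp
  have e: "mirror_normal c t = (2 * (c \<bullet> v) / (v \<bullet> v)) *\<^sub>R v" unfolding mirror_normal_def v(2)
    by (rule diff_reflection)
  show "mirror_normal c t \<noteq> 0" using e k v(1) by simp
  show "t = reflection (mirror_normal c t)" using v(2) unfolding e
    by (simp add: reflection_scaleR[OF k])
qed

lemma inner_mirror_normal_pos: "regular c \<Longrightarrow> t \<in> reflections \<Longrightarrow> 0 < c \<bullet> mirror_normal c t"
  using inner_mirror_normal mirror_normal_reflection(1) by (metis inner_gt_zero_iff half_gt_zero)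

lemma fixes_iff_inner_mirror_normal:
  "regular c \<Longrightarrow> t \<in> reflections \<Longrightarrow> t u = u \<longleftrightarrow> u \<bullet> mirror_normal c t = 0"
  by (metis mirror_normal_reflection reflection_fixes_iff)

lemma regular_iff_inner_mirror_normal:
  "regular c \<Longrightarrow> regular u \<longleftrightarrow> (\<forall>t\<in>reflections. u \<bullet> mirror_normal c t \<noteq> 0)"
  unfolding regular_def[of u] using fixes_iff_inner_mirror_normal by blast

lemma in_chamber_self: "regular c \<Longrightarrow> c \<in> chamber c"
  unfolding chamber_def using inner_mirror_normal_pos by blast

lemma open_chamber: "open (chamber c)"
proof -
  have "chamber c = (\<Inter>t\<in>reflections. {u. 0 < u \<bullet> mirror_normal c t})" unfolding chamber_def by blast
  moreover have "open {u. 0 < u \<bullet> mirror_normal c t}" for t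
    by (intro open_Collect_less continuous_intros)
  ultimately show ?thesis using finite_reflections by (auto intro!: open_INT)
qed

lemma convex_chamber: "convex (chamber c)"
proof -
  have "chamber c = (\<Inter>t\<in>reflections. {u. 0 < u \<bullet> mirror_normal c t})" unfolding chamber_def by blast
  moreover have "convex {u. 0 < u \<bullet> mirror_normal c t}" for t
    using convex_halfspace_gt[of 0 "mirror_normal c t"] by (simp add: inner_commute)
  ultimately show ?thesis by (auto intro!: convex_INT)
qed

lemma regular_if_in_chamber: "regular c \<Longrightarrow> u \<in> chamber c \<Longrightarrow> regular u"
  unfolding regular_iff_inner_mirror_normal chamber_def by force

lemma in_chamber_if_regular:
  assumes "regular c" "u \<in> closed_chamber c" "regular u" shows "u \<in> chamber c"
  using assms regular_iff_inner_mirror_normal[OF assms(1)] unfolding chamber_def closed_chamber_def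
  by (simp add: order_le_less)

text \<open>If \<open>t \<circ> h\<close> does not increase \<open>\<langle>a, h b\<rangle>\<close>, then \<open>h b\<close> lies on the side of the
  mirror of \<open>t\<close> containing \<open>a\<close>.\<close>

lemma max_inner_in_closed_chamber:
  assumes c: "regular c" and a: "a \<in> chamber c"
    and H: "\<forall>t\<in>reflections. \<forall>h\<in>H. t \<circ> h \<in> H" and h: "h \<in> H"
    and max: "\<forall>g\<in>H. a \<bullet> g b \<le> a \<bullet> h b"
  shows "h b \<in> closed_chamber c"
  unfolding closed_chamber_def
proof (intro CollectI ballI)
  fix t assume t: "t \<in> reflections"
  then have "a \<bullet> t (h b) \<le> a \<bullet> h b" using H h max by fastforce
  then have "a \<bullet> reflection (mirror_normal c t) (h b) \<le> a \<bullet> h b"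
    using mirror_normal_reflection(2)[OF c t] by simp
  moreover have "0 < a \<bullet> mirror_normal c t" using a t unfolding chamber_def by blast
  ultimately show "0 \<le> h b \<bullet> mirror_normal c t"
    using inner_nonneg_if_reflection_le[OF mirror_normal_reflection(1)[OF c t]] by blast
qed

section \<open>Reflection groups from coverings by Voronoi cells\<close>

lemma closed_segment_subset_principal:
  assumes c: "regular c" and p: "p \<in> principal G" and seg: "closed_segment p r \<subseteq> chamber c"
    and avoid: "\<forall>h\<in>G - {id} - reflections. \<forall>s\<in>{0..1}.
      h ((1 - s) *\<^sub>R p + s *\<^sub>R r) \<noteq> (1 - s) *\<^sub>R p + s *\<^sub>R r"
  shows "closed_segment p r \<subseteq> principal G"
proof
  fix u assume u: "u \<in> closed_segment p r"
  show "u \<in> principal G" unfolding principal_iff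
  proof (intro ballI impI)
    fix h assume h: "h \<in> G" "h u = u"
    show "h = id"
    proof (rule ccontr)
      assume "h \<noteq> id"
      show False
      proof (cases "h \<in> reflections")
        case True
        then show False using regular_if_in_chamber[OF c] seg u h(2) unfolding regular_def by blast
      next
        case False
        obtain s where "s \<in> {0..1}" "u = (1 - s) *\<^sub>R p + s *\<^sub>R r"
          using u unfolding closed_segment_def by auto
        then show False using avoid h \<open>h \<noteq> id\<close> False by blast
      qed
    qed
  qed
qed

text \<open>The points fixed by non-reflections have codimension at least two, so a generic point \<open>r\<close>
  of the chamber sees \<open>p\<close> and \<open>q\<close> through segments avoiding them.\<close>

lemma principal_connected_in_chamber:
  assumes c: "regular c" and p: "p \<in> chamber c" "p \<in> principal G"
    and q: "q \<in> chamber c" "q \<in> principal G"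
  obtains S where "connected S" "p \<in> S" "q \<in> S" "S \<subseteq> principal G"
proof -
  define B where "B p h = {r. \<exists>s\<in>{0..1}. (1 - s) *\<^sub>R p + s *\<^sub>R r \<in> {x. h x = x}}"
    for p :: 'a and h :: "'a \<Rightarrow> 'a"
  have negl: "negligible (B p h)" if "h \<in> G - {id} - reflections" "p \<in> principal G" for p h
    unfolding B_def
  proof (rule negligible_segments_meeting_subspace)
    show "subspace {x. h x = x}" using subspace_fixed_points G_linear that by blast
    show "p \<notin> {x. h x = x}" using that principal_iff by blast
    show "dim {x. h x = x} + 1 < DIM('a)" using fixed_space_dim_if_not_reflection that by blast
  qed
  define X where "X = G - {id} - reflections"
  define NN where "NN = B p ` X \<union> B q ` X"
  have "finite NN" unfolding NN_def X_def using finite_G by simp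
  moreover have "\<forall>N\<in>NN. negligible N" unfolding NN_def X_def using negl p(2) q(2) by blast
  ultimately obtain r where r: "r \<in> chamber c" "\<forall>N\<in>NN. r \<notin> N"
    using open_avoids_finite_negligible[OF open_chamber] p(1) by blast
  have seg: "closed_segment p' r \<subseteq> principal G" if p': "p' \<in> {p, q}" for p'
  proof (rule closed_segment_subset_principal[OF c])
    show "p' \<in> principal G" "closed_segment p' r \<subseteq> chamber c"
      using p' p q closed_segment_subset[OF _ r(1) convex_chamber] by auto
    show "\<forall>h\<in>G - {id} - reflections. \<forall>s\<in>{0..1}.
        h ((1 - s) *\<^sub>R p' + s *\<^sub>R r) \<noteq> (1 - s) *\<^sub>R p' + s *\<^sub>R r"
    proof (intro ballI)
      fix h and s :: real assume h: "h \<in> G - {id} - reflections" and s: "s \<in> {0..1}"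
      have "B p' h \<in> NN" unfolding NN_def X_def using h p' by blast
      then have "r \<notin> B p' h" using r(2) by blast
      then show "h ((1 - s) *\<^sub>R p' + s *\<^sub>R r) \<noteq> (1 - s) *\<^sub>R p' + s *\<^sub>R r"
        using s unfolding B_def by blast
    qed
  qed
  show thesis
  proof (rule that)
    show "connected (closed_segment p r \<union> closed_segment q r)"
      by (rule connected_Un) (auto intro: connected_segment)
    show "closed_segment p r \<union> closed_segment q r \<subseteq> principal G" using seg by blast
  qed auto
qed

lemma orbit_meets_chamber_once:
  assumes Q: "\<forall>x\<in>principal G. principal G \<subseteq> Qcell G x" and c: "c \<in> principal G"
    and q: "q \<in> orbit G c" "q \<in> chamber c"
  shows "q = c"
proof -
  have reg: "regular c" using regular_if_principal[OF c] .
  have qP: "q \<in> principal G" using principal_orbit[OF c q(1)] .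
  obtain S where S: "connected S" "c \<in> S" "q \<in> S" "S \<subseteq> principal G"
    using principal_connected_in_chamber[OF reg in_chamber_self[OF reg] c q(2) qP] by blast
  have "S \<subseteq> (\<Union>p\<in>orbit G c. voronoi G p)" using S(4) Q c unfolding Qcell_def by blast
  then show ?thesis
    using connected_meets_one_voronoi[OF S(1) _ in_orbit_self q(1) S(2) in_voronoi_self S(3)
        in_voronoi_self] by simp
qed

lemma reflection_group_if_principal_subset_Qcell:
  assumes Q: "\<forall>x\<in>principal G. principal G \<subseteq> Qcell G x"
  shows "reflection_group G"
proof -
  define W where "W = generated reflections"
  have WG: "W \<subseteq> G" unfolding W_def by (rule generated_subset_G[OF reflections_subset_G])
  obtain c where c: "c \<in> principal G" using ex_principal by blast
  have reg: "regular c" using regular_if_principal[OF c] .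
  have "g \<in> W" if g: "g \<in> G" for g
  proof -
    have "finite W" using WG finite_G finite_subset by blast
    moreover have "W \<noteq> {}" unfolding W_def using generated.gen_id by blast
    ultimately obtain w where w: "w \<in> W" "\<forall>w'\<in>W. c \<bullet> w' (g c) \<le> c \<bullet> w (g c)"
      using ex_max_on_finite[of W "\<lambda>w. c \<bullet> w (g c)"] by auto
    have wG: "w \<in> G" using w WG by blast
    have "\<forall>t\<in>reflections. \<forall>h\<in>W. t \<circ> h \<in> W" unfolding W_def using generated.gen_step by blast
    then have "w (g c) \<in> closed_chamber c"
      by (rule max_inner_in_closed_chamber[OF reg in_chamber_self[OF reg] _ w])
    then have "w (g c) \<in> chamber c"
      using in_chamber_if_regular reg regular_apply[OF wG regular_apply[OF g reg]] by blast
    moreover have "w (g c) \<in> orbit G c" using in_orbit[OF G_comp[OF wG g]] by simp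
    ultimately have "(w \<circ> g) c = c" using orbit_meets_chamber_once[OF Q c] by simp
    then have wg: "w \<circ> g = id" using c principal_iff G_comp[OF wG g] by blast
    have "g = inv w"
    proof
      fix x
      have "w (g x) = x" using wg by (simp add: fun_eq_iff)
      then show "g x = inv w x" using G_inv_f_f[OF wG, of "g x"] by simp
    qed
    moreover have "inv w \<in> W"
      using inv_in_generated_reflections[OF subset_refl] w(1) unfolding W_def by simp
    ultimately show ?thesis by simp
  qed
  then have "G = generated reflections" using WG unfolding W_def by blast
  then show ?thesis unfolding reflection_group_def
    by (intro exI[of _ reflections]) (auto simp: reflections_def)
qed

end

section \<open>Separating mirrors and admissible base points\<close>

lemma mult_less_0_trans_iff:
  fixes a b c :: real
  assumes "a \<noteq> 0" "b \<noteq> 0" "c \<noteq> 0"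
  shows "a * c < 0 \<longleftrightarrow> \<not> (a * b < 0 \<longleftrightarrow> b * c < 0)"
  using assms by (cases "a > 0"; cases "b > 0"; cases "c > 0") (auto simp: mult_less_0_iff)

lemma inner_line_two_hyperplanes:
  fixes c v v1 v2 :: "'a::real_inner"
  assumes "(c - l *\<^sub>R v) \<bullet> v1 = 0" "(c - l *\<^sub>R v) \<bullet> v2 = 0"
  shows "c \<bullet> ((v \<bullet> v1) *\<^sub>R v2 - (v \<bullet> v2) *\<^sub>R v1) = 0"
proof -
  have "c \<bullet> v1 = l * (v \<bullet> v1)" "c \<bullet> v2 = l * (v \<bullet> v2)"
    using assms by (simp_all add: inner_diff_left)
  then show ?thesis by (simp add: inner_diff_right algebra_simps)
qed

lemma reflection_eq_if_parallel:
  fixes v1 v2 :: "'a::real_inner"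
  assumes "v2 \<noteq> 0" "a \<noteq> 0" "a *\<^sub>R v2 = b *\<^sub>R v1"
  shows "reflection v2 = reflection v1"
proof -
  have "v2 = (1 / a) *\<^sub>R (a *\<^sub>R v2)" using assms(2) by simp
  then have v2: "v2 = (b / a) *\<^sub>R v1" using assms(3) by simp
  then have "b / a \<noteq> 0" using assms(1) by auto
  then show ?thesis using reflection_scaleR[of "b / a" v1] v2 by simp
qed

context finite_orthogonal_group
begin

definition separating :: "'a \<Rightarrow> 'a \<Rightarrow> ('a \<Rightarrow> 'a) set" where
  "separating x y = {t\<in>reflections. (x - t x) \<bullet> (y - t y) < 0}"

lemma separating_subset: "separating x y \<subseteq> reflections"
  unfolding separating_def by blast

lemma separating_commute: "separating x y = separating y x"
  unfolding separating_def by (simp add: inner_commute)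

lemma separating_self: "separating x x = {}"
  unfolding separating_def by (simp add: not_less)

lemma in_separating_iff:
  assumes "t \<in> reflections" "v \<noteq> 0" "t = reflection v"
  shows "t \<in> separating x y \<longleftrightarrow> (x \<bullet> v) * (y \<bullet> v) < 0"
proof -
  have vv: "0 < v \<bullet> v" using assms by simp
  have "(x - t x) \<bullet> (y - t y) = 4 * ((x \<bullet> v) * (y \<bullet> v)) / (v \<bullet> v)"
    using vv assms(3) by (simp add: diff_reflection field_simps)
  then show ?thesis using assms(1) vv by (simp add: separating_def pos_divide_less_eq)
qed

lemma separating_trans:
  assumes "regular x" "regular y" "regular z"
  shows "separating x z = (separating x y - separating y z) \<union> (separating y z - separating x y)"
proof (rule set_eqI)
  fix t
  show "t \<in> separating x z \<longleftrightarrow>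
      t \<in> (separating x y - separating y z) \<union> (separating y z - separating x y)"
  proof (cases "t \<in> reflections")
    case False then show ?thesis using separating_subset by blast
  next
    case True
    obtain v where v: "v \<noteq> 0" "t = reflection v" using True by (rule reflectionsE)
    have nz: "x \<bullet> v \<noteq> 0" "y \<bullet> v \<noteq> 0" "z \<bullet> v \<noteq> 0"
      using assms True reflection_fixes_iff[OF v(1)] v(2) unfolding regular_def by auto
    show ?thesis
      using in_separating_iff[OF True v, of x z] in_separating_iff[OF True v, of x y]
        in_separating_iff[OF True v, of y z] mult_less_0_trans_iff[OF nz] by auto
  qed
qed

lemma separating_apply:
  assumes g: "g \<in> G" shows "separating (g x) (g y) = (\<lambda>t. g \<circ> t \<circ> inv g) ` separating x y"
proof (rule set_eqI)
  fix t'
  show "t' \<in> separating (g x) (g y) \<longleftrightarrow> t' \<in> (\<lambda>t. g \<circ> t \<circ> inv g) ` separating x y"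
  proof
    assume t': "t' \<in> separating (g x) (g y)"
    define t where "t = inv g \<circ> t' \<circ> g"
    have tT: "t \<in> reflections"
      unfolding t_def using reflections_conj[OF G_inv[OF g], of t'] t' G_inv_inv[OF g]
      by (simp add: separating_def)
    have tt: "t' = g \<circ> t \<circ> inv g" unfolding t_def using g by (simp add: fun_eq_iff G_f_inv_f)
    have d: "x - t x = inv g (g x - t' (g x))" for x
      unfolding t_def using g by (simp add: G_diff[OF G_inv[OF g]] G_inv_f_f)
    have "(x - t x) \<bullet> (y - t y) = (g x - t' (g x)) \<bullet> (g y - t' (g y))"
      unfolding d using G_inner[OF G_inv[OF g]] by simp
    then have "t \<in> separating x y" using t' tT by (simp add: separating_def)
    then show "t' \<in> (\<lambda>t. g \<circ> t \<circ> inv g) ` separating x y" using tt by blast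
  next
    assume "t' \<in> (\<lambda>t. g \<circ> t \<circ> inv g) ` separating x y"
    then obtain t where t: "t \<in> separating x y" "t' = g \<circ> t \<circ> inv g" by blast
    have tT: "t \<in> reflections" using t(1) by (simp add: separating_def)
    have d: "g x - t' (g x) = g (x - t x)" for x using g t(2) by (simp add: G_diff G_inv_f_f)
    have "(g x - t' (g x)) \<bullet> (g y - t' (g y)) = (x - t x) \<bullet> (y - t y)"
      unfolding d using G_inner[OF g] by simp
    then show "t' \<in> separating (g x) (g y)" using t reflections_conj[OF g tT]
      by (simp add: separating_def)
  qed
qed

lemma separating_apply_reflection:
  "s \<in> reflections \<Longrightarrow> separating (s x) (s y) = (\<lambda>t. s \<circ> t \<circ> s) ` separating x y"
  using separating_apply[OF reflections_in_G] reflections_inv by metis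

text \<open>Along each ray from \<open>c\<close> orthogonal to a mirror, no point lies on two mirrors; so the
  mirrors met by the segment from \<open>c\<close> to its reflection are met one at a time.\<close>

definition admissible :: "'a \<Rightarrow> bool" where
  "admissible c \<longleftrightarrow> regular c \<and>
    (\<forall>t\<in>reflections. \<forall>t1\<in>reflections. \<forall>t2\<in>reflections. \<forall>s.
       t1 (c - s *\<^sub>R mirror_normal c t) = c - s *\<^sub>R mirror_normal c t \<and>
       t2 (c - s *\<^sub>R mirror_normal c t) = c - s *\<^sub>R mirror_normal c t
       \<longrightarrow> t1 = t2)"

text \<open>Choose \<open>c\<close> off the mirrors and off the hyperplanes orthogonal to the vectors
  \<open>\<langle>n, n\<^sub>1\<rangle> n\<^sub>2 - \<langle>n, n\<^sub>2\<rangle> n\<^sub>1\<close> built from normals of mirrors: if the line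
  \<open>c + \<real> n\<close> met the mirrors of \<open>n\<^sub>1\<close> and \<open>n\<^sub>2\<close> in a common point, \<open>c\<close> would be orthogonal to
  that vector.\<close>

lemma ex_admissible: "\<exists>c. admissible c"
proof -
  obtain p where "p \<in> principal G" using ex_principal by blast
  then have p: "regular p" by (rule regular_if_principal)
  let ?n = "mirror_normal p"
  define w where "w t t1 t2 = (?n t \<bullet> ?n t1) *\<^sub>R ?n t2 - (?n t \<bullet> ?n t2) *\<^sub>R ?n t1"
    for t t1 t2 :: "'a \<Rightarrow> 'a"
  define V where "V = ?n ` reflections
    \<union> ((\<lambda>(t, t1, t2). w t t1 t2) ` (reflections \<times> reflections \<times> reflections) - {0})"
  have "finite V" unfolding V_def using finite_reflections by simp
  moreover have "0 \<notin> V" unfolding V_def using mirror_normal_reflection(1)[OF p] by auto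
  ultimately obtain c where c: "\<forall>v\<in>V. c \<bullet> v \<noteq> 0" using ex_nonorthogonal by blast
  have c1: "c \<bullet> ?n t \<noteq> 0" if "t \<in> reflections" for t
    using c that unfolding V_def by blast
  have c2: "c \<bullet> w t t1 t2 \<noteq> 0"
    if "t \<in> reflections" "t1 \<in> reflections" "t2 \<in> reflections" "w t t1 t2 \<noteq> 0" for t t1 t2
    using c that unfolding V_def by force
  have "regular c" using c1 regular_iff_inner_mirror_normal[OF p] by blast
  moreover have "t1 = t2"
    if t: "t \<in> reflections" "t1 \<in> reflections" "t2 \<in> reflections"
      and fixed: "t1 (c - s *\<^sub>R mirror_normal c t) = c - s *\<^sub>R mirror_normal c t"
        "t2 (c - s *\<^sub>R mirror_normal c t) = c - s *\<^sub>R mirror_normal c t"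
    for t t1 t2 s
  proof -
    define v where "v = ?n t"
    define v1 where "v1 = ?n t1"
    define v2 where "v2 = ?n t2"
    have tv: "t = reflection v" "t1 = reflection v1" "t2 = reflection v2" and v2: "v2 \<noteq> 0"
      using mirror_normal_reflection[OF p] t unfolding v_def v1_def v2_def by blast+
    define l where "l = s * (2 * (c \<bullet> v) / (v \<bullet> v))"
    have line: "c - s *\<^sub>R mirror_normal c t = c - l *\<^sub>R v"
      unfolding mirror_normal_def l_def tv(1) diff_reflection by simp
    have e1: "(c - l *\<^sub>R v) \<bullet> v1 = 0"
      using fixed(1) fixes_iff_inner_mirror_normal[OF p t(2)] unfolding line v1_def by simp
    have e2: "(c - l *\<^sub>R v) \<bullet> v2 = 0"
      using fixed(2) fixes_iff_inner_mirror_normal[OF p t(3)] unfolding line v2_def by simp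
    have "c \<bullet> w t t1 t2 = 0"
      unfolding w_def v_def[symmetric] v1_def[symmetric] v2_def[symmetric]
      using e1 e2 by (rule inner_line_two_hyperplanes)
    then have w0: "(v \<bullet> v1) *\<^sub>R v2 = (v \<bullet> v2) *\<^sub>R v1"
      using c2[OF t] unfolding w_def v_def v1_def v2_def by auto
    have "v \<bullet> v1 \<noteq> 0" using e1 c1[OF t(2)] unfolding v1_def by (auto simp: inner_diff_left)
    then have "reflection v2 = reflection v1" using reflection_eq_if_parallel[OF v2 _ w0] by blast
    then show "t1 = t2" unfolding tv by simp
  qed
  ultimately show ?thesis unfolding admissible_def by blast
qed

end

locale based_reflection_group = finite_orthogonal_group +
  fixes c :: 'a
  assumes G_eq_generated_reflections: "G = generated reflections"
    and admissible_c: "admissible c"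
begin

lemma regular_c: "regular c"
  using admissible_c by (simp add: admissible_def)

lemma regular_apply_c: "g \<in> G \<Longrightarrow> regular (g c)"
  using regular_apply regular_c by blast

lemma in_separating_c_iff:
  assumes t: "t \<in> reflections" shows "t \<in> separating c u \<longleftrightarrow> u \<bullet> mirror_normal c t < 0"
proof -
  have "t \<in> separating c u \<longleftrightarrow> (c \<bullet> mirror_normal c t) * (u \<bullet> mirror_normal c t) < 0"
    using in_separating_iff[OF t mirror_normal_reflection[OF regular_c t]] .
  also have "\<dots> \<longleftrightarrow> u \<bullet> mirror_normal c t < 0"
    using inner_mirror_normal_pos[OF regular_c t] by (auto simp: mult_less_0_iff)
  finally show ?thesis .
qed

definition simple :: "('a \<Rightarrow> 'a) set" where
  "simple = {s\<in>reflections. separating c (s c) = {s}}"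

lemma simple_subset: "simple \<subseteq> reflections"
  unfolding simple_def by blast

section \<open>The first mirror crossed from \<open>c\<close> to \<open>t c\<close>\<close>

text \<open>The segment \<open>s \<mapsto> c - s mirror_normal c t\<close> runs from \<open>c\<close> (at \<open>s = 0\<close>) to \<open>t c\<close> (at \<open>s = 1\<close>) and
  meets the mirror of \<open>t'\<close> at time \<open>crossing_time t t'\<close>.\<close>

definition crossing_time :: "('a \<Rightarrow> 'a) \<Rightarrow> ('a \<Rightarrow> 'a) \<Rightarrow> real" where
  "crossing_time t t' = (c \<bullet> mirror_normal c t') / (mirror_normal c t \<bullet> mirror_normal c t')"

lemma in_separating_reflection_iff:
  assumes "t' \<in> reflections"
  shows "t' \<in> separating c (t c) \<longleftrightarrow> c \<bullet> mirror_normal c t' < mirror_normal c t \<bullet> mirror_normal c t'"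
proof -
  have "t c = c - mirror_normal c t" by (simp add: mirror_normal_def)
  then show ?thesis using in_separating_c_iff[OF assms, of "t c"] by (simp add: inner_diff_left)
qed

lemma crossing_time_bounds:
  assumes "t' \<in> separating c (t c)"
  shows "0 < mirror_normal c t \<bullet> mirror_normal c t'"
    and "0 < crossing_time t t'" "crossing_time t t' < 1"
proof -
  have t': "t' \<in> reflections" using assms separating_subset by blast
  have a: "0 < c \<bullet> mirror_normal c t'" using inner_mirror_normal_pos[OF regular_c t'] .
  have b: "c \<bullet> mirror_normal c t' < mirror_normal c t \<bullet> mirror_normal c t'"
    using assms in_separating_reflection_iff[of t' t, OF t'] by simp
  show "0 < mirror_normal c t \<bullet> mirror_normal c t'" using a b by linarith
  then show "0 < crossing_time t t'" "crossing_time t t' < 1"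
    using a b unfolding crossing_time_def by (simp_all add: divide_less_eq)
qed

lemma fixes_segment_iff:
  assumes "t' \<in> separating c (t c)"
  shows "t' (c - s *\<^sub>R mirror_normal c t) = c - s *\<^sub>R mirror_normal c t \<longleftrightarrow> s = crossing_time t t'"
proof -
  have t': "t' \<in> reflections" using assms separating_subset by blast
  have nz: "mirror_normal c t \<bullet> mirror_normal c t' \<noteq> 0"
    using crossing_time_bounds(1)[of t' t, OF assms] by simp
  have "t' (c - s *\<^sub>R mirror_normal c t) = c - s *\<^sub>R mirror_normal c t
      \<longleftrightarrow> c \<bullet> mirror_normal c t' - s * (mirror_normal c t \<bullet> mirror_normal c t') = 0"
    using fixes_iff_inner_mirror_normal[OF regular_c t'] by (simp add: inner_diff_left)
  also have "\<dots> \<longleftrightarrow> s = crossing_time t t'"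
    using nz unfolding crossing_time_def by (auto simp: field_simps)
  finally show ?thesis .
qed

lemma crossing_time_inj:
  assumes t: "t \<in> reflections" and t12: "t1 \<in> separating c (t c)" "t2 \<in> separating c (t c)"
    and eq: "crossing_time t t1 = crossing_time t t2"
  shows "t1 = t2"
  using admissible_c t t12 separating_subset eq fixes_segment_iff[of t1 t, OF t12(1)]
    fixes_segment_iff[of t2 t, OF t12(2)]
  unfolding admissible_def by blast

lemma crossing_time_self:
  assumes t: "t \<in> reflections"
  shows "t \<in> separating c (t c)" "crossing_time t t = 1 / 2"
proof -
  have pos: "0 < mirror_normal c t \<bullet> mirror_normal c t"
    using mirror_normal_reflection(1)[OF regular_c t] by simp
  have half: "c \<bullet> mirror_normal c t = (mirror_normal c t \<bullet> mirror_normal c t) / 2"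
    using inner_mirror_normal[OF t] .
  show "t \<in> separating c (t c)"
    using in_separating_reflection_iff[of t t, OF t] pos half by linarith
  show "crossing_time t t = 1 / 2" using pos half unfolding crossing_time_def by simp
qed

lemma reflection_segment:
  assumes t: "t \<in> reflections"
  shows "t (c - s *\<^sub>R mirror_normal c t) = c - (1 - s) *\<^sub>R mirror_normal c t"
proof -
  have tc: "t c = c - mirror_normal c t" by (simp add: mirror_normal_def)
  have "t (c - s *\<^sub>R mirror_normal c t) = t c - s *\<^sub>R t (mirror_normal c t)"
    using reflections_in_G[OF t] by (simp add: G_diff G_scaleR)
  also have "\<dots> = c - (1 - s) *\<^sub>R mirror_normal c t"
    unfolding tc reflection_mirror_normal[OF t] by (simp add: algebra_simps)
  finally show ?thesis .
qed

text \<open>Conjugation by \<open>t\<close> reverses the segment from \<open>c\<close> to \<open>t c\<close>.\<close>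

lemma conj_crossing_time:
  assumes t: "t \<in> reflections" and t': "t' \<in> separating c (t c)"
  shows "t \<circ> t' \<circ> t \<in> separating c (t c)" "crossing_time t (t \<circ> t' \<circ> t) = 1 - crossing_time t t'"
proof -
  have "separating (t c) c = (\<lambda>r. t \<circ> r \<circ> t) ` separating c (t c)"
    using separating_apply_reflection[OF t, of c "t c"] reflections_involution[OF t] by simp
  then show tt': "t \<circ> t' \<circ> t \<in> separating c (t c)"
    using t' separating_commute[of "t c" c] by blast
  let ?s = "crossing_time t (t \<circ> t' \<circ> t)"
  have "t (t' (t (c - ?s *\<^sub>R mirror_normal c t))) = c - ?s *\<^sub>R mirror_normal c t"
    using fixes_segment_iff[of "t \<circ> t' \<circ> t" t, OF tt', of ?s] by simp
  then have "t' (t (c - ?s *\<^sub>R mirror_normal c t)) = t (c - ?s *\<^sub>R mirror_normal c t)"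
    using reflections_involution[OF t] by metis
  then have "t' (c - (1 - ?s) *\<^sub>R mirror_normal c t) = c - (1 - ?s) *\<^sub>R mirror_normal c t"
    using reflection_segment[OF t] by simp
  then show "?s = 1 - crossing_time t t'" using fixes_segment_iff[of t' t, OF t'] by simp
qed

lemma reflection_mirror_normal_conj:
  assumes t1: "t1 \<in> reflections" and t': "t' \<in> reflections"
  shows "\<exists>k. t1 (mirror_normal c t') = k *\<^sub>R mirror_normal c (t1 \<circ> t' \<circ> t1)"
proof -
  let ?n = "mirror_normal c"
  have t'': "t1 \<circ> t' \<circ> t1 \<in> reflections" using reflections_conj_reflection[OF t1 t'] .
  have "(t1 \<circ> t' \<circ> t1) (t1 (?n t')) = t1 (t' (?n t'))"
    using reflections_involution[OF t1] by simp
  also have "\<dots> = - t1 (?n t')"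
    using reflection_mirror_normal[OF t'] G_linear[OF reflections_in_G[OF t1]]
      by (simp add: linear_neg)
  finally have "reflection (?n (t1 \<circ> t' \<circ> t1)) (t1 (?n t')) = - t1 (?n t')"
    using mirror_normal_reflection(2)[OF regular_c t''] by simp
  then show ?thesis using parallel_if_reflection_eq_minus by blast
qed

lemma simple_if_only_mirror:
  assumes t1: "t1 \<in> reflections" and m: "t1 m = m"
    and pos: "\<forall>t'\<in>reflections. t' \<noteq> t1 \<longrightarrow> 0 < m \<bullet> mirror_normal c t'"
  shows "t1 \<in> simple"
  unfolding simple_def
proof (intro CollectI conjI t1 set_eqI iffI)
  let ?n = "mirror_normal c"
  fix t' assume t'S: "t' \<in> separating c (t1 c)"
  have t': "t' \<in> reflections" using t'S separating_subset by blast
  show "t' \<in> {t1}"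
  proof (rule ccontr)
    assume "t' \<notin> {t1}"
    then have ne: "t' \<noteq> t1" by simp
    define t'' where "t'' = t1 \<circ> t' \<circ> t1"
    have t'': "t'' \<in> reflections" unfolding t''_def using reflections_conj_reflection[OF t1 t'] .
    have "t'' \<noteq> t1"
    proof
      assume "t'' = t1"
      then have "t1 \<circ> t' \<circ> t1 = t1 \<circ> t1 \<circ> t1"
        unfolding t''_def using reflections_comp_self[OF t1] by simp
      then show False using ne inj_on_conj_reflection[OF t1, of UNIV] by (auto dest: inj_onD)
    qed
    obtain k where k: "t1 (?n t') = k *\<^sub>R ?n t''"
      using reflection_mirror_normal_conj[OF t1 t'] unfolding t''_def by blast
    have "m \<bullet> t1 (?n t') = t1 m \<bullet> ?n t'" using reflections_inner_commute[OF t1] by simp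
    then have "0 < k * (m \<bullet> ?n t'')" using k m pos t' ne by simp
    moreover have "0 < m \<bullet> ?n t''" using pos t'' \<open>t'' \<noteq> t1\<close> by blast
    ultimately have "0 < k" by (simp add: zero_less_mult_iff)
    have "t1 c \<bullet> ?n t' = c \<bullet> t1 (?n t')" using reflections_inner_commute[OF t1] .
    also have "\<dots> = k * (c \<bullet> ?n t'')" using k by simp
    finally have "0 < t1 c \<bullet> ?n t'" using \<open>0 < k\<close> inner_mirror_normal_pos[OF regular_c t''] by simp
    then show False using t'S in_separating_c_iff[OF t'] by simp
  qed
next
  let ?n = "mirror_normal c"
  fix t' assume "t' \<in> {t1}"
  have "t1 c \<bullet> ?n t1 = c \<bullet> t1 (?n t1)" using reflections_inner_commute[OF t1] .
  also have "\<dots> = - (c \<bullet> ?n t1)" using reflection_mirror_normal[OF t1] by simp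
  finally have "t1 c \<bullet> ?n t1 < 0" using inner_mirror_normal_pos[OF regular_c t1] by simp
  then show "t' \<in> separating c (t1 c)" using in_separating_c_iff[OF t1] \<open>t' \<in> {t1}\<close> by simp
qed

lemma inner_pos_before_first_crossing:
  assumes t: "t \<in> reflections" and t1: "t1 \<in> separating c (t c)"
    and first: "\<forall>t'\<in>separating c (t c). crossing_time t t1 \<le> crossing_time t t'"
    and s: "0 \<le> s" "s \<le> crossing_time t t1" and t': "t' \<in> reflections" "t' \<noteq> t1"
  shows "0 < (c - s *\<^sub>R mirror_normal c t) \<bullet> mirror_normal c t'"
proof (rule ccontr)
  let ?n = "mirror_normal c"
  assume "\<not> 0 < (c - s *\<^sub>R ?n t) \<bullet> ?n t'"
  then have le: "c \<bullet> ?n t' \<le> s * (?n t \<bullet> ?n t')" by (simp add: inner_diff_left)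
  have cp: "0 < c \<bullet> ?n t'" using inner_mirror_normal_pos[OF regular_c t'(1)] .
  have sp: "0 < s" using le cp s(1) by (cases "s = 0") auto
  have "0 < s * (?n t \<bullet> ?n t')" using le cp by linarith
  then have np: "0 < ?n t \<bullet> ?n t'" by (rule zero_less_mult_pos[OF _ sp])
  have "crossing_time t t' \<le> s"
    unfolding crossing_time_def using le np by (simp add: pos_divide_le_eq mult.commute)
  then have le1: "crossing_time t t' \<le> crossing_time t t1" using s(2) by simp
  then have "crossing_time t t' < 1" using crossing_time_bounds(3)[of t1 t, OF t1] by simp
  then have "c \<bullet> ?n t' < ?n t \<bullet> ?n t'" unfolding crossing_time_def using np
    by (simp add: divide_less_eq)
  then have t'A: "t' \<in> separating c (t c)" using in_separating_reflection_iff[of t' t, OF t'(1)]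
    by simp
  then have "crossing_time t t' = crossing_time t t1" using le1 first by (simp add: order_antisym)
  then show False using crossing_time_inj[OF t t'A t1] t'(2) by simp
qed

text \<open>The first mirror crossed by the segment from \<open>c\<close> to \<open>t c\<close> is simple; it is crossed
  before time \<open>1/2\<close> unless \<open>t\<close> itself is simple.\<close>

lemma ex_simple_separating:
  assumes t: "t \<in> reflections" and ne: "separating c (t c) \<noteq> {t}"
  obtains t1 where "t1 \<in> simple" "t1 \<in> separating c (t c)" "t1 \<noteq> t \<circ> t1 \<circ> t"
proof -
  let ?A = "separating c (t c)" and ?\<tau> = "crossing_time t"
  have tA: "t \<in> ?A" using crossing_time_self(1)[OF t] .
  have fin: "finite ?A" using finite_reflections separating_subset finite_subset by blast
  obtain t2 where t2: "t2 \<in> ?A" "t2 \<noteq> t" using ne tA by blast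
  have "?\<tau> t2 \<noteq> 1 / 2" using crossing_time_inj[OF t t2(1) tA] t2(2) crossing_time_self(2)[OF t]
    by auto
  then have "\<exists>t0\<in>?A. ?\<tau> t0 < 1 / 2"
  proof (cases "?\<tau> t2 < 1 / 2")
    case False
    then have "?\<tau> (t \<circ> t2 \<circ> t) < 1 / 2"
      using conj_crossing_time(2)[OF t t2(1)] \<open>?\<tau> t2 \<noteq> 1 / 2\<close> by simp
    then show ?thesis using conj_crossing_time(1)[OF t t2(1)] by blast
  qed (use t2(1) in blast)
  then obtain t0 where t0: "t0 \<in> ?A" "?\<tau> t0 < 1 / 2" by blast
  have "?A \<noteq> {}" using tA by blast
  then obtain t1 where t1: "t1 \<in> ?A" and first: "\<forall>t'\<in>?A. ?\<tau> t1 \<le> ?\<tau> t'"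
    using ex_max_on_finite[OF fin, of "\<lambda>t'. - ?\<tau> t'"] by auto
  have half: "?\<tau> t1 < 1 / 2" using first t0 by fastforce
  have "t1 \<in> simple"
  proof (rule simple_if_only_mirror)
    show "t1 \<in> reflections" using t1 separating_subset by blast
    show "t1 (c - ?\<tau> t1 *\<^sub>R mirror_normal c t) = c - ?\<tau> t1 *\<^sub>R mirror_normal c t"
      using fixes_segment_iff[of t1 t, OF t1] by simp
    show "\<forall>t'\<in>reflections. t' \<noteq> t1 \<longrightarrow> 0 < (c - ?\<tau> t1 *\<^sub>R mirror_normal c t) \<bullet> mirror_normal c t'"
      using inner_pos_before_first_crossing[OF t t1 first] crossing_time_bounds(2)[of t1 t, OF t1]
        by simp
  qed
  moreover have "t1 \<noteq> t \<circ> t1 \<circ> t"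
  proof
    assume "t1 = t \<circ> t1 \<circ> t"
    then have "?\<tau> t1 = 1 - ?\<tau> t1" using conj_crossing_time(2)[OF t t1] by simp
    then show False using half by simp
  qed
  ultimately show thesis using that t1 by blast
qed

lemma card_separating_conj_simple:
  assumes t: "t \<in> reflections" and t1: "t1 \<in> simple" "t1 \<in> separating c (t c)"
    and ne: "t1 \<noteq> t \<circ> t1 \<circ> t"
  shows "card (separating c ((t1 \<circ> t \<circ> t1) c)) + 2 = card (separating c (t c))"
proof -
  let ?A = "separating c (t c)"
  have fin: "finite ?A" using finite_reflections separating_subset finite_subset by blast
  have t1T: "t1 \<in> reflections" using t1(1) simple_subset by blast
  have sep_t1: "separating c (t1 c) = {t1}" using t1(1) unfolding simple_def by blast
  have reg1: "regular (t c)" using regular_apply_c[OF reflections_in_G[OF t]] .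
  have reg2: "regular (t1 c)" using regular_apply_c[OF reflections_in_G[OF t1T]] .
  have reg3: "regular (t (t1 c))" using regular_apply[OF reflections_in_G[OF t] reg2] .
  have reg4: "regular (t1 (t (t1 c)))" using regular_apply[OF reflections_in_G[OF t1T] reg3] .
  have tt1t: "t \<circ> t1 \<circ> t \<in> ?A" using conj_crossing_time(1)[OF t t1(2)] .
  have "separating (t c) (t (t1 c)) = {t \<circ> t1 \<circ> t}"
    using separating_apply_reflection[OF t, of c "t1 c"] sep_t1 by simp
  then have E1: "separating c (t (t1 c)) = ?A - {t \<circ> t1 \<circ> t}"
    unfolding separating_trans[OF regular_c reg1 reg3] using tt1t by auto
  define Y where "Y = (\<lambda>r. t1 \<circ> r \<circ> t1) ` (?A - {t \<circ> t1 \<circ> t})"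
  have "t1 = t1 \<circ> t1 \<circ> t1" using reflections_comp_self[OF t1T] by simp
  moreover have "t1 \<in> ?A - {t \<circ> t1 \<circ> t}" using t1(2) ne by simp
  ultimately have t1Y: "t1 \<in> Y" unfolding Y_def by (rule image_eqI)
  have "separating (t1 c) (t1 (t (t1 c))) = Y"
    using separating_apply_reflection[OF t1T, of c "t (t1 c)"] E1 unfolding Y_def by simp
  then have "separating c (t1 (t (t1 c))) = Y - {t1}"
    unfolding separating_trans[OF regular_c reg2 reg4] sep_t1 using t1Y by auto
  moreover have "finite Y" unfolding Y_def using fin by simp
  moreover have "card Y = card ?A - 1"
    unfolding Y_def using card_image[OF inj_on_conj_reflection[OF t1T]] fin tt1t
    by (simp add: card_Diff_singleton)
  moreover have "0 < card Y" using t1Y \<open>finite Y\<close> by (auto simp: card_gt_0_iff)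
  ultimately show ?thesis using t1Y by (simp add: card_Diff_singleton)
qed

end

section \<open>Words in simple reflections\<close>

definition comp_list :: "('a \<Rightarrow> 'a) list \<Rightarrow> 'a \<Rightarrow> 'a" where
  "comp_list ws = foldr (\<circ>) ws id"

lemma comp_list_Nil [simp]: "comp_list [] = id"
  by (simp add: comp_list_def)

lemma comp_list_Cons [simp]: "comp_list (s # ws) = s \<circ> comp_list ws"
  by (simp add: comp_list_def)

lemma comp_list_append [simp]: "comp_list (ws @ vs) = comp_list ws \<circ> comp_list vs"
  by (induction ws) (auto simp: comp_assoc)

text \<open>For a word \<open>s\<^sub>1 \<dots> s\<^sub>n\<close> in reflections, the reflections \<open>s\<^sub>1\<close>, \<open>s\<^sub>1 s\<^sub>2 s\<^sub>1\<close>,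
  \<open>s\<^sub>1 s\<^sub>2 s\<^sub>3 s\<^sub>2 s\<^sub>1\<close>, \<dots>, whose mirrors separate consecutive chambers of the gallery
  \<open>c, s\<^sub>1 c, s\<^sub>1 s\<^sub>2 c, \<dots>\<close>.\<close>

fun inversions :: "('a \<Rightarrow> 'a) list \<Rightarrow> ('a \<Rightarrow> 'a) list" where
  "inversions [] = []"
| "inversions (s # ws) = s # map (\<lambda>r. s \<circ> r \<circ> s) (inversions ws)"

lemma length_inversions [simp]: "length (inversions ws) = length ws"
  by (induction ws) auto

context finite_orthogonal_group
begin

lemma comp_list_in_G: "set ws \<subseteq> reflections \<Longrightarrow> comp_list ws \<in> G"
  by (induction ws) (auto simp: id_in_G G_comp reflections_in_G)

lemma comp_list_delete_one:
  "set ws \<subseteq> reflections \<Longrightarrow> r \<in> set (inversions ws) \<Longrightarrow>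
    \<exists>ws'. length ws' + 1 = length ws \<and> set ws' \<subseteq> set ws \<and> comp_list ws = r \<circ> comp_list ws'"
proof (induction ws arbitrary: r)
  case (Cons s ws)
  have s: "s \<in> reflections" using Cons.prems by simp
  show ?case
  proof (cases "r = s")
    case False
    then obtain r' where r': "r' \<in> set (inversions ws)" "r = s \<circ> r' \<circ> s" using Cons.prems(2) by auto
    obtain ws' where ws': "length ws' + 1 = length ws" "set ws' \<subseteq> set ws"
        "comp_list ws = r' \<circ> comp_list ws'"
      using Cons.IH[OF _ r'(1)] Cons.prems(1) by (meson set_subset_Cons subset_trans)
    have "comp_list (s # ws) = r \<circ> comp_list (s # ws')"
      using ws'(3) r'(2) reflections_involution[OF s] by (simp add: fun_eq_iff)
    then show ?thesis using ws' by (intro exI[of _ "s # ws'"]) auto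
  qed (intro exI[of _ ws], auto)
qed simp

lemma comp_list_delete_two:
  "set ws \<subseteq> reflections \<Longrightarrow> \<not> distinct (inversions ws) \<Longrightarrow>
    \<exists>ws'. length ws' + 2 = length ws \<and> set ws' \<subseteq> set ws \<and> comp_list ws' = comp_list ws"
proof (induction ws)
  case (Cons s ws)
  have s: "s \<in> reflections" and ws: "set ws \<subseteq> reflections" using Cons.prems by simp_all
  have inj: "inj_on (\<lambda>r. s \<circ> r \<circ> s) (set (inversions ws))" using inj_on_conj_reflection[OF s] .
  consider "s \<in> set (map (\<lambda>r. s \<circ> r \<circ> s) (inversions ws))" | "\<not> distinct (inversions ws)"
    using Cons.prems(2) inj by (auto simp: distinct_map)
  then show ?case
  proof cases
    case 1
    then obtain r where r: "r \<in> set (inversions ws)" "s = s \<circ> r \<circ> s" by auto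
    have "s \<circ> s \<circ> s = s \<circ> r \<circ> s" using r(2) reflections_comp_self[OF s] by simp
    then have "s = r" using inj_on_conj_reflection[OF s, of UNIV] by (auto dest: inj_onD)
    then obtain ws' where ws': "length ws' + 1 = length ws" "set ws' \<subseteq> set ws"
        "comp_list ws = s \<circ> comp_list ws'"
      using comp_list_delete_one[OF ws] r(1) by blast
    have "comp_list (s # ws) = comp_list ws'"
      using ws'(3) reflections_involution[OF s] by (simp add: fun_eq_iff)
    then show ?thesis using ws' by (intro exI[of _ ws']) auto
  next
    case 2
    then obtain ws' where "length ws' + 2 = length ws" "set ws' \<subseteq> set ws"
        "comp_list ws' = comp_list ws"
      using Cons.IH[OF ws] by blast
    then show ?thesis by (intro exI[of _ "s # ws'"]) auto
  qed
qed simp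

end

context based_reflection_group
begin

lemma reflection_simple_word:
  assumes "t \<in> reflections" shows "\<exists>ws. set ws \<subseteq> simple \<and> comp_list ws = t"
  using assms
proof (induction "card (separating c (t c))" arbitrary: t rule: less_induct)
  case less
  show ?case
  proof (cases "separating c (t c) = {t}")
    case True
    then have "t \<in> simple" using less.prems unfolding simple_def by blast
    then show ?thesis by (intro exI[of _ "[t]"]) simp
  next
    case False
    then obtain t1 where t1: "t1 \<in> simple" "t1 \<in> separating c (t c)" "t1 \<noteq> t \<circ> t1 \<circ> t"
      using ex_simple_separating[OF less.prems] by blast
    have t1T: "t1 \<in> reflections" using t1(1) simple_subset by blast
    have "card (separating c ((t1 \<circ> t \<circ> t1) c)) < card (separating c (t c))"
      using card_separating_conj_simple[OF less.prems t1] by simp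
    then obtain ws where ws: "set ws \<subseteq> simple" "comp_list ws = t1 \<circ> t \<circ> t1"
      using less.hyps reflections_conj_reflection[OF t1T less.prems] by blast
    have "comp_list ([t1] @ ws @ [t1]) = t"
      using ws(2) reflections_involution[OF t1T] by (simp add: fun_eq_iff)
    then show ?thesis using ws(1) t1(1) by (intro exI[of _ "[t1] @ ws @ [t1]"]) simp
  qed
qed

lemma simple_word:
  assumes "g \<in> G" shows "\<exists>ws. set ws \<subseteq> simple \<and> comp_list ws = g"
proof -
  have "g \<in> generated reflections" using assms G_eq_generated_reflections by simp
  then show ?thesis
  proof (induction g rule: generated.induct)
    case gen_id
    then show ?case by (intro exI[of _ "[]"]) simp
  next
    case (gen_step r f)
    obtain wr where "set wr \<subseteq> simple" "comp_list wr = r"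
      using reflection_simple_word[OF gen_step.hyps(1)] by blast
    moreover obtain wf where "set wf \<subseteq> simple" "comp_list wf = f" using gen_step.IH by blast
    ultimately show ?case by (intro exI[of _ "wr @ wf"]) simp
  qed
qed

lemma separating_comp_list:
  "set ws \<subseteq> simple \<Longrightarrow> distinct (inversions ws) \<Longrightarrow> separating c (comp_list ws c) = set (inversions ws)"
proof (induction ws)
  case Nil
  then show ?case by (simp add: separating_self)
next
  case (Cons s ws)
  have sS: "s \<in> simple" and wsS: "set ws \<subseteq> simple" using Cons.prems by simp_all
  have sT: "s \<in> reflections" using sS simple_subset by blast
  define Y where "Y = set (map (\<lambda>r. s \<circ> r \<circ> s) (inversions ws))"
  have dist: "distinct (inversions ws)" "s \<notin> Y"
    using Cons.prems(2) unfolding Y_def by (auto simp: distinct_map)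
  have wG: "comp_list ws \<in> G" using comp_list_in_G wsS simple_subset by blast
  have Y: "separating (s c) (s (comp_list ws c)) = Y"
    using separating_apply_reflection[OF sT, of c "comp_list ws c"] Cons.IH[OF wsS dist(1)]
    unfolding Y_def by simp
  have s: "separating c (s c) = {s}" using sS unfolding simple_def by blast
  have "separating c (s (comp_list ws c)) = insert s Y"
    unfolding separating_trans[OF regular_c regular_apply_c[OF reflections_in_G[OF sT]]
        regular_apply[OF reflections_in_G[OF sT] regular_apply_c[OF wG]]] Y s
    using dist(2) by blast
  then show ?case unfolding Y_def by simp
qed

lemma comp_list_eq_id_if_separating_empty:
  "set ws \<subseteq> simple \<Longrightarrow> separating c (comp_list ws c) = {} \<Longrightarrow> comp_list ws = id"
proof (induction "length ws" arbitrary: ws rule: less_induct)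
  case less
  show ?case
  proof (cases "distinct (inversions ws)")
    case True
    then have "inversions ws = []" using separating_comp_list[OF less.prems(1)] less.prems(2)
      by simp
    then show ?thesis using length_inversions[of ws] by simp
  next
    case False
    then obtain ws' where ws': "length ws' + 2 = length ws" "set ws' \<subseteq> set ws"
        "comp_list ws' = comp_list ws"
      using comp_list_delete_two less.prems(1) simple_subset by blast
    then show ?thesis using less.hyps[of ws'] less.prems by auto
  qed
qed

lemma eq_id_if_separating_empty: "g \<in> G \<Longrightarrow> separating c (g c) = {} \<Longrightarrow> g = id"
  using simple_word comp_list_eq_id_if_separating_empty by blast

section \<open>The closed chamber is a fundamental domain\<close>

lemma in_chamber_iff: "u \<in> chamber c \<longleftrightarrow> regular u \<and> separating c u = {}"
proof -
  have "u \<in> chamber c \<longleftrightarrow> (\<forall>t\<in>reflections. u \<bullet> mirror_normal c t \<noteq> 0 \<and> \<not> u \<bullet> mirror_normal c t < 0)"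
    unfolding chamber_def by auto
  also have "\<dots> \<longleftrightarrow> regular u \<and> separating c u = {}"
    using regular_iff_inner_mirror_normal[OF regular_c] in_separating_c_iff separating_subset
      by blast
  finally show ?thesis .
qed

lemma chamber_simply_transitive:
  assumes u: "u \<in> chamber c" and g: "g \<in> G" and gu: "g u \<in> chamber c" shows "g = id"
proof -
  have u': "regular u" "separating c u = {}" and gu': "regular (g u)" "separating c (g u) = {}"
    using u gu in_chamber_iff by auto
  have "separating (g u) (g c) = (\<lambda>t. g \<circ> t \<circ> inv g) ` separating u c"
    using separating_apply[OF g] .
  then have "separating (g u) (g c) = {}" using u'(2) separating_commute[of u c] by simp
  then have "separating c (g c) = {}"
    unfolding separating_trans[OF regular_c gu'(1) regular_apply_c[OF g]] gu'(2) by simp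
  then show ?thesis using eq_id_if_separating_empty[OF g] by blast
qed

lemma inner_le_chamber:
  assumes a: "a \<in> chamber c" and b: "b \<in> chamber c" and g: "g \<in> G" shows "a \<bullet> g b \<le> a \<bullet> b"
proof -
  obtain h where h: "h \<in> G" "\<forall>g\<in>G. a \<bullet> g b \<le> a \<bullet> h b"
    using ex_max_on_finite[OF finite_G, of "\<lambda>h. a \<bullet> h b"] id_in_G by blast
  have "\<forall>t\<in>reflections. \<forall>h\<in>G. t \<circ> h \<in> G" using G_comp reflections_in_G by blast
  then have "h b \<in> closed_chamber c" using max_inner_in_closed_chamber[OF regular_c a _ h] by blast
  moreover have "regular (h b)" using regular_apply[OF h(1)] b in_chamber_iff by blast
  ultimately have "h b \<in> chamber c" using in_chamber_if_regular regular_c by blast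
  then have "h = id" using chamber_simply_transitive[OF b h(1)] by blast
  then show ?thesis using h(2) g by force
qed

text \<open>Perturb \<open>a\<close> and \<open>b\<close> into the open chamber by \<open>e c\<close> and let \<open>e \<rightarrow> 0\<close>.\<close>

lemma inner_le_closed_chamber:
  assumes a: "a \<in> closed_chamber c" and b: "b \<in> closed_chamber c" and g: "g \<in> G"
  shows "a \<bullet> g b \<le> a \<bullet> b"
proof -
  have shift: "u + e *\<^sub>R c \<in> chamber c" if "u \<in> closed_chamber c" "0 < e" for u e
    unfolding chamber_def
  proof (intro CollectI ballI)
    fix t assume t: "t \<in> reflections"
    have "0 \<le> u \<bullet> mirror_normal c t" using that(1) t unfolding closed_chamber_def by blast
    moreover have "0 < e * (c \<bullet> mirror_normal c t)"
      using that(2) inner_mirror_normal_pos[OF regular_c t] by simp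
    ultimately show "0 < (u + e *\<^sub>R c) \<bullet> mirror_normal c t" by (simp add: inner_add_left)
  qed
  define D where "D = a \<bullet> g b - a \<bullet> b"
  define P where "P = a \<bullet> g c + c \<bullet> g b - a \<bullet> c - c \<bullet> b"
  define Q where "Q = c \<bullet> g c - c \<bullet> c"
  have "\<forall>e>0. D + e * P + e * e * Q \<le> 0"
  proof (intro allI impI)
    fix e :: real assume e: "0 < e"
    have "(a + e *\<^sub>R c) \<bullet> g (b + e *\<^sub>R c) \<le> (a + e *\<^sub>R c) \<bullet> (b + e *\<^sub>R c)"
      using inner_le_chamber[OF shift[OF a e] shift[OF b e] g] .
    moreover have "g (b + e *\<^sub>R c) = g b + e *\<^sub>R g c" using g by (simp add: G_add G_scaleR)
    ultimately have "(a + e *\<^sub>R c) \<bullet> (g b + e *\<^sub>R g c) \<le> (a + e *\<^sub>R c) \<bullet> (b + e *\<^sub>R c)" by simp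
    then show "D + e * P + e * e * Q \<le> 0"
      unfolding D_def P_def Q_def by (simp add: inner_add_left inner_add_right algebra_simps)
  qed
  then have "D \<le> 0" by (rule nonpos_if_quadratic_nonpos)
  then show ?thesis unfolding D_def by simp
qed

lemma closed_chamber_orbit_fixed:
  assumes a: "a \<in> closed_chamber c" and g: "g \<in> G" and ga: "g a \<in> closed_chamber c"
  shows "g a = a"
proof -
  have "g a \<bullet> g a \<le> g a \<bullet> a" using inner_le_closed_chamber[OF ga a g] .
  then have "(g a - a) \<bullet> (g a - a) \<le> 0"
    using G_inner[OF g, of a a] by (simp add: inner_diff_left inner_diff_right inner_commute)
  then have "(g a - a) \<bullet> (g a - a) = 0" using inner_ge_zero[of "g a - a"] by linarith
  then show ?thesis by simp
qed

lemma closed_chamber_orbit_unique: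
  assumes "a \<in> closed_chamber c" "b \<in> closed_chamber c" "orbit G a = orbit G b" shows "a = b"
proof -
  have "b \<in> orbit G a" using assms(3) in_orbit_self by metis
  then obtain g where "g \<in> G" "b = g a" by (rule orbitE)
  then show ?thesis using closed_chamber_orbit_fixed[OF assms(1)] assms(2) by metis
qed

lemma ex_in_closed_chamber: "\<exists>g\<in>G. g u \<in> closed_chamber c"
proof -
  obtain h where h: "h \<in> G" "\<forall>g\<in>G. c \<bullet> g u \<le> c \<bullet> h u"
    using ex_max_on_finite[OF finite_G, of "\<lambda>h. c \<bullet> h u"] id_in_G by blast
  have "\<forall>t\<in>reflections. \<forall>h\<in>G. t \<circ> h \<in> G" using G_comp reflections_in_G by blast
  then show ?thesis
    using max_inner_in_closed_chamber[OF regular_c in_chamber_self[OF regular_c] _ h] h(1) by blast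
qed

section \<open>Voronoi cells and geodesics of reflection groups\<close>

lemma in_voronoi_if_max_inner:
  assumes a: "a \<in> chamber c" and k: "k \<in> G" and max: "\<forall>g\<in>G. a \<bullet> g x \<le> a \<bullet> k x"
  shows "a \<in> voronoi G (k x)"
  unfolding in_voronoi_iff
proof (intro ballI impI)
  have H: "\<forall>t\<in>reflections. \<forall>h\<in>G. t \<circ> h \<in> G" using G_comp reflections_in_G by blast
  fix p assume p: "p \<in> orbit G (k x)" "p \<noteq> k x"
  then have "p \<in> orbit G x" using orbit_eq[OF in_orbit[OF k]] by simp
  then obtain k' where k': "k' \<in> G" "p = k' x" by (rule orbitE)
  show "p \<bullet> a < k x \<bullet> a"
  proof (rule ccontr)
    assume "\<not> p \<bullet> a < k x \<bullet> a"
    then have "\<forall>g\<in>G. a \<bullet> g x \<le> a \<bullet> k' x" using max k' by (auto simp: inner_commute)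
    then have "p \<in> closed_chamber c"
      using max_inner_in_closed_chamber[OF regular_c a H k'(1)] k'(2) by simp
    moreover have "k x \<in> closed_chamber c"
      using max_inner_in_closed_chamber[OF regular_c a H k max] .
    moreover have "orbit G p = orbit G (k x)" using orbit_eq[OF p(1)] .
    ultimately show False using closed_chamber_orbit_unique p(2) by blast
  qed
qed

lemma principal_in_Qcell:
  assumes z: "z \<in> principal G" shows "z \<in> Qcell G x"
proof -
  obtain h where h: "h \<in> G" "h z \<in> closed_chamber c" using ex_in_closed_chamber by blast
  then have hz: "h z \<in> chamber c"
    using in_chamber_if_regular regular_c regular_apply[OF h(1) regular_if_principal[OF z]] by blast
  obtain k where k: "k \<in> G" "\<forall>g\<in>G. h z \<bullet> g x \<le> h z \<bullet> k x"
    using ex_max_on_finite[OF finite_G, of "\<lambda>k. h z \<bullet> k x"] id_in_G by blast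
  have "h z \<in> voronoi G (k x)" using in_voronoi_if_max_inner[OF hz k] .
  then have "inv h (h z) \<in> voronoi G (inv h (k x))" using voronoi_apply[OF G_inv[OF h(1)]] by blast
  then have "z \<in> voronoi G ((inv h \<circ> k) x)" using G_inv_f_f[OF h(1)] by simp
  moreover have "(inv h \<circ> k) x \<in> orbit G x" using in_orbit G_comp[OF G_inv[OF h(1)] k(1)] by blast
  ultimately show ?thesis unfolding Qcell_def by blast
qed

lemma qdist_closed_chamber:
  assumes u: "u \<in> closed_chamber c" and w: "w \<in> closed_chamber c"
  shows "qdist (orbit G u) (orbit G w) = norm (u - w)"
proof -
  obtain g where g: "g \<in> G" "qdist (orbit G u) (orbit G w) = norm (u - g w)"
    using qdist_orbit_attained by blast
  have "g w \<bullet> u \<le> w \<bullet> u" using inner_le_closed_chamber[OF u w g(1)] by (simp add: inner_commute)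
  then have "norm (u - w) \<le> norm (u - g w)"
    using norm_diff_le_if_inner_le[of "g w" w u] G_norm[OF g(1)] by simp
  moreover have "qdist (orbit G u) (orbit G w) \<le> norm (u - w)"
    using qdist_orbit_le[OF in_orbit_self in_orbit_self] .
  ultimately show ?thesis using g(2) by simp
qed

lemma min_geodesic_lift:
  assumes a: "a \<in> closed_chamber c" and b: "b \<in> closed_chamber c"
    and m: "(L, \<gamma>) \<in> min_geodesics G (orbit G a) (orbit G b)"
  obtains \<rho> where "\<forall>t\<in>{0..L}. \<gamma> t = orbit G (\<rho> t)"
    "\<forall>s\<in>{0..L}. \<forall>t\<in>{0..L}. norm (\<rho> s - \<rho> t) = \<bar>s - t\<bar>" "\<rho> 0 = a" "\<rho> L = b"
proof -
  have lift: "\<exists>p. p \<in> closed_chamber c \<and> \<gamma> t = orbit G p" if t: "t \<in> {0..L}" for t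
  proof -
    have "\<gamma> t \<in> range (orbit G)" using m t by (simp add: min_geodesics_def quot_space_def)
    then obtain u where u: "\<gamma> t = orbit G u" by blast
    obtain g where g: "g \<in> G" "g u \<in> closed_chamber c" using ex_in_closed_chamber by blast
    then show ?thesis using u orbit_apply[OF g(1), of u] by metis
  qed
  define \<rho> where "\<rho> t = (SOME p. p \<in> closed_chamber c \<and> \<gamma> t = orbit G p)" for t
  have \<rho>: "\<rho> t \<in> closed_chamber c \<and> \<gamma> t = orbit G (\<rho> t)" if "t \<in> {0..L}" for t
    unfolding \<rho>_def using someI_ex[OF lift[OF that]] .
  have "0 \<le> L" using m by (simp add: min_geodesics_def)
  then have "orbit G (\<rho> 0) = orbit G a" "orbit G (\<rho> L) = orbit G b"
    using \<rho>[of 0] \<rho>[of L] m by (auto simp: min_geodesics_def)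
  then have "\<rho> 0 = a" "\<rho> L = b"
    using \<rho>[of 0] \<rho>[of L] \<open>0 \<le> L\<close> closed_chamber_orbit_unique a b by auto
  moreover have "norm (\<rho> s - \<rho> t) = \<bar>s - t\<bar>" if st: "s \<in> {0..L}" "t \<in> {0..L}" for s t
  proof -
    have "qdist (\<gamma> s) (\<gamma> t) = \<bar>s - t\<bar>" using m st by (simp add: min_geodesics_def)
    moreover have "qdist (\<gamma> s) (\<gamma> t) = norm (\<rho> s - \<rho> t)"
      using \<rho>[OF st(1)] \<rho>[OF st(2)] qdist_closed_chamber by simp
    ultimately show ?thesis by simp
  qed
  ultimately show thesis using that \<rho> by blast
qed

lemma min_geodesics_closed_chamber:
  assumes a: "a \<in> closed_chamber c" and b: "b \<in> closed_chamber c"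
  shows "min_geodesics G (orbit G a) (orbit G b)
    = {(norm (a - b), orbit_segment a b (norm (a - b)))}"
proof -
  define L where "L = norm (a - b)"
  define \<gamma>0 where "\<gamma>0 = orbit_segment a b L"
  have qd: "qdist (orbit G a) (orbit G b) = L" using qdist_closed_chamber[OF a b] L_def by simp
  have "e = (L, \<gamma>0)" if e: "e \<in> min_geodesics G (orbit G a) (orbit G b)" for e
  proof -
    obtain L' \<gamma> where eq: "e = (L', \<gamma>)" by (cases e)
    then have m: "(L', \<gamma>) \<in> min_geodesics G (orbit G a) (orbit G b)" using e by simp
    obtain \<rho> where \<rho>: "\<forall>t\<in>{0..L'}. \<gamma> t = orbit G (\<rho> t)" "\<rho> 0 = a" "\<rho> L' = b"
      and iso: "\<forall>s\<in>{0..L'}. \<forall>t\<in>{0..L'}. norm (\<rho> s - \<rho> t) = \<bar>s - t\<bar>"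
      using min_geodesic_lift[OF a b m] by blast
    have "0 \<le> L'" using m by (simp add: min_geodesics_def)
    then have "norm (\<rho> 0 - \<rho> L') = L'" using iso by simp
    then have L': "L' = L" using \<rho>(2,3) L_def by simp
    have "\<gamma> t = \<gamma>0 t" for t
    proof (cases "t \<in> {0..L}")
      case True
      then have "\<gamma> t = orbit G (\<rho> t)" using \<rho>(1) L' by simp
      also have "\<rho> t = \<rho> 0 + (t / L') *\<^sub>R (\<rho> L' - \<rho> 0)"
        using isometric_path_eq_segment[OF iso] True L' by blast
      finally show ?thesis using True \<rho>(2,3) L' by (simp add: \<gamma>0_def orbit_segment_def)
    next
      case False
      then show ?thesis using m L' unfolding min_geodesics_def \<gamma>0_def orbit_segment_def by auto
    qed
    then show ?thesis using eq L' by auto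
  qed
  moreover have "(L, \<gamma>0) \<in> min_geodesics G (orbit G a) (orbit G b)"
    unfolding \<gamma>0_def using orbit_segment_in_min_geodesics[OF in_orbit_self L_def qd] .
  ultimately show ?thesis unfolding \<gamma>0_def L_def by blast
qed

lemma card_min_geodesics_eq_1: "card (min_geodesics G (orbit G x) (orbit G y)) = 1"
proof -
  obtain g1 where g1: "g1 \<in> G" and a: "g1 x \<in> closed_chamber c" using ex_in_closed_chamber by blast
  obtain g2 where g2: "g2 \<in> G" and b: "g2 y \<in> closed_chamber c" using ex_in_closed_chamber by blast
  show ?thesis
    using min_geodesics_closed_chamber[OF a b] orbit_apply[OF g1] orbit_apply[OF g2] by simp
qed

end

context finite_orthogonal_group
begin

lemma chi_eq_1_iff_principal_subset_Qcell:
  "chi G = 1 \<longleftrightarrow> (\<forall>x\<in>principal G. principal G \<subseteq> Qcell G x)"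
  using in_Qcell_if_chi_eq_1 chi_eq_1_if_card_Sset_eq_1
    card_Sset_eq_1_if_principal_subset_Qcell by blast

lemma based_if_reflection_group:
  assumes "reflection_group G" obtains c where "based_reflection_group G c"
proof -
  obtain c where "admissible c" using ex_admissible by blast
  then have "based_reflection_group G c"
    using generated_reflections_if_reflection_group[OF assms]
    by unfold_locales (auto simp: reflections_def)
  then show thesis by (rule that)
qed

lemma principal_subset_Qcell_if_reflection_group:
  "reflection_group G \<Longrightarrow> principal G \<subseteq> Qcell G x"
  by (metis based_if_reflection_group based_reflection_group.principal_in_Qcell subsetI)

lemma unique_geodesics_if_reflection_group:
  "reflection_group G \<Longrightarrow> card (min_geodesics G (orbit G x) (orbit G y)) = 1"
  by (metis based_if_reflection_group based_reflection_group.card_min_geodesics_eq_1)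

end

theorem lemma41:
  fixes G :: "('a::euclidean_space \<Rightarrow> 'a) set"
  assumes "finite G"
    and "\<forall>g\<in>G. orthogonal_transformation g"
    and "id \<in> G"
    and "\<forall>f\<in>G. \<forall>g\<in>G. f \<circ> g \<in> G"
    and "\<forall>g\<in>G. inv g \<in> G"
  shows "((\<forall>x y. card (min_geodesics G (orbit G x) (orbit G y)) = 1)
            \<longleftrightarrow> (\<forall>x\<in>principal G. Qcell G x = principal G))
       \<and> ((\<forall>x\<in>principal G. Qcell G x = principal G) \<longleftrightarrow> reflection_group G)
       \<and> (reflection_group G \<longleftrightarrow> chi G = 1)"
proof -
  interpret finite_orthogonal_group G using assms by unfold_locales
  have "(\<forall>x\<in>principal G. Qcell G x = principal G) \<longleftrightarrow> (\<forall>x\<in>principal G. principal G \<subseteq> Qcell G x)"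
    using Qcell_subset_principal by blast
  then show ?thesis
    using in_Qcell_if_unique_geodesics reflection_group_if_principal_subset_Qcell
      principal_subset_Qcell_if_reflection_group unique_geodesics_if_reflection_group
      chi_eq_1_iff_principal_subset_Qcell
    by blast
qed

end
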